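(* Let $D>1$ be fixed, $0<\lambda<\lambda_D$, and assume $\Gamma$ is a complete $D$-ary tree of depth $h$ with \[ h\le \underline h-\frac{\ln(\underline h)}{\ln(D)}+\frac{\ln(1-\frac1D)}{\ln(D)}. \] Then the total variation distance between $\mathbb{P}_1$ and $\mathbb{P}_0$ tends to $0$ as $n\to\infty$. Thus for any test $T(G)\in\{0,1\}$, $\mathbb{P}_1(T(G)=1)-\mathbb{P}_0(T(G)=1)\to0$.
   Context: Model: $\mathbb{P}_0$: $G\sim\mathcal G(n,\lambda/n)$; $\mathbb{P}_1$: $G=G_0\cup G'$ with $G_0\sim\mathcal G(n,\lambda/n)$ and $G'$ the image of $\Gamma$ under a uniformly random injection of its vertex set into $[n]$, independent of $G_0$. A complete $D$-ary tree of depth $h$ has root at depth $0$, each vertex at depth $<h$ has $D$ children, and $K=(D^{h+1}-1)/(D-1)$ vertices. $\psi_D(\mu)=\mathbb{P}(\mathrm{Poi}(\mu)\ge D)$; $p_*(D,\lambda)$ is the largest nonnegative root of $p=\psi_D(\lambda p)$; $\lambda_D=\sup\{\lambda>0:p_*(D,\lambda)=0\}$. $p_h$ is the probability that a Galton–Watson tree with offspring $\mathrm{Poi}(\lambda)$ contains a complete $D$-ary tree of depth $h$ rooted at its root, and $\underline h=\sup\{h>0:p_h>\ln(n)/n\}$. *)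

theory Defs
  imports "HOL-Probability.Probability"
begin

definition poi :: "real \<Rightarrow> nat pmf" where
  "poi mu = (if mu > 0 then poisson_pmf mu else return_pmf 0)"

definition psi :: "nat \<Rightarrow> real \<Rightarrow> real" where
  "psi D mu = measure_pmf.prob (poi mu) {D..}"

definition p_star :: "nat \<Rightarrow> real \<Rightarrow> real" where
  "p_star D lam = Sup {p. 0 \<le> p \<and> p = psi D (lam * p)}"

definition lambda_crit :: "nat \<Rightarrow> real" where
  "lambda_crit D = Sup {lam. lam > 0 \<and> p_star D lam = 0}"

datatype rtree = Node "rtree list"

fun iid_list :: "nat \<Rightarrow> 'a pmf \<Rightarrow> 'a list pmf" where
  "iid_list 0 p = return_pmf []"
| "iid_list (Suc k) p = bind_pmf p (\<lambda>x. map_pmf (Cons x) (iid_list k p))"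

fun gw :: "real \<Rightarrow> nat \<Rightarrow> rtree pmf" where
  "gw lam 0 = return_pmf (Node [])"
| "gw lam (Suc h) = bind_pmf (poi lam) (\<lambda>k. map_pmf Node (iid_list k (gw lam h)))"

fun contains_complete :: "nat \<Rightarrow> nat \<Rightarrow> rtree \<Rightarrow> bool" where
  "contains_complete D 0 t = True"
| "contains_complete D (Suc h) (Node ts) = (D \<le> length (filter (contains_complete D h) ts))"

definition p_h :: "nat \<Rightarrow> real \<Rightarrow> nat \<Rightarrow> real" where
  "p_h D lam h = measure_pmf.prob (gw lam h) {t. contains_complete D h t}"

definition h_low :: "nat \<Rightarrow> real \<Rightarrow> nat \<Rightarrow> nat" where
  "h_low D lam n = Sup {h. h > 0 \<and> p_h D lam h > ln (real n) / real n}"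

(* graphs on [n] = {0..<n}: sets of 2-element edges *)
definition pairs :: "nat \<Rightarrow> nat set set" where
  "pairs n = {e. \<exists>i j. i < j \<and> j < n \<and> e = {i, j}}"

definition erdos_renyi :: "nat \<Rightarrow> real \<Rightarrow> nat set set pmf" where
  "erdos_renyi n p = map_pmf (\<lambda>f. {e \<in> pairs n. f e}) (Pi_pmf (pairs n) False (\<lambda>_. bernoulli_pmf p))"

(* complete D-ary tree of depth h: vertices are words over {0..<D} of length <= h *)
definition tree_verts :: "nat \<Rightarrow> nat \<Rightarrow> nat list set" where
  "tree_verts D h = {w. length w \<le> h \<and> set w \<subseteq> {..<D}}"

definition tree_edges :: "nat \<Rightarrow> nat \<Rightarrow> nat list set set" where
  "tree_edges D h = {e. \<exists>w c. length w < h \<and> set w \<subseteq> {..<D} \<and> c < D \<and> e = {w, w @ [c]}}"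

definition injections :: "'a set \<Rightarrow> nat \<Rightarrow> ('a \<Rightarrow> nat) set" where
  "injections V n = {f. f \<in> extensional V \<and> f ` V \<subseteq> {..<n} \<and> inj_on f V}"

definition P0 :: "real \<Rightarrow> nat \<Rightarrow> nat set set pmf" where
  "P0 lam n = erdos_renyi n (lam / real n)"

definition P1 :: "real \<Rightarrow> nat \<Rightarrow> nat \<Rightarrow> nat \<Rightarrow> nat set set pmf" where
  "P1 lam D h n = bind_pmf (erdos_renyi n (lam / real n)) (\<lambda>G0.
      map_pmf (\<lambda>\<sigma>. G0 \<union> (\<lambda>e. \<sigma> ` e) ` tree_edges D h)
        (pmf_of_set (injections (tree_verts D h) n)))"

definition tv_dist :: "'a pmf \<Rightarrow> 'a pmf \<Rightarrow> real" where
  "tv_dist p q = (SUP A. \<bar>measure_pmf.prob p A - measure_pmf.prob q A\<bar>)"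

end

theory Submission
  imports Defs "HOL-Real_Asymp.Real_Asymp"
begin

(* Second moment method. Let S \<sigma> be the edge set planted by the injection \<sigma>. The likelihood ratio of
   P1 with respect to G(n, \<lambda>/n) has second moment equal to the average of (n/\<lambda>)^|S \<sigma> \<inter> S \<sigma>'|
   over independent uniform injections \<sigma>, \<sigma>', so |P1(A) - P0(A)|^2 is at most this average minus 1.
   Expanding x^|S \<inter> S'| as the sum of (x - 1)^|F| over F \<subseteq> S \<inter> S', every nonempty F is the image of a
   forest in \<Gamma> with more vertices than edges, and the injections covering it are counted through the
   embeddings of that forest into \<Gamma>; this bounds the average minus 1 by 2 K C^K / n, where K is the
   number of vertices of \<Gamma> and C depends only on D and \<lambda>.
   On the other hand p_(h+1) \<le> \<lambda>^D / D! p_h^D, so p_h decays doubly exponentially and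
   D^h_low = O(log n). The hypothesis on h then gives K \<le> 2 D^h = o(log n), hence K C^K / n \<rightarrow> 0. *)

lemma emeasure_iid_list_count_ge:
  "emeasure (measure_pmf (iid_list k p)) {ts. j \<le> length (filter Q ts)}
     \<le> ennreal (real (k choose j) * measure_pmf.prob p {x. Q x} ^ j)"
proof (induction k arbitrary: j)
  case 0
  then show ?case by (cases j) (auto simp: indicator_def)
next
  case (Suc k)
  define r where "r = measure_pmf.prob p {x. Q x}"
  have r0: "0 \<le> r" by (simp add: r_def)
  show ?case
  proof (cases j)
    case 0
    then show ?thesis by (simp add: measure_pmf.emeasure_eq_measure)
  next
    case (Suc i)
    have pre: "Cons x -` {ts. j \<le> length (filter Q ts)} =
      (if Q x then {ts. i \<le> length (filter Q ts)} else {ts. j \<le> length (filter Q ts)})" for x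
      using Suc by auto
    have "emeasure (measure_pmf (iid_list (Suc k) p)) {ts. j \<le> length (filter Q ts)}
       = (\<integral>\<^sup>+x. emeasure (measure_pmf (iid_list k p)) (Cons x -` {ts. j \<le> length (filter Q ts)}) \<partial>measure_pmf p)"
      by (simp add: map_pmf_rep_eq emeasure_distr)
    also have "\<dots> \<le> (\<integral>\<^sup>+x. ennreal (real (k choose i) * r ^ i) * indicator {x. Q x} x
                   + ennreal (real (k choose j) * r ^ j) \<partial>measure_pmf p)"
    proof (rule nn_integral_mono)
      fix x
      show "emeasure (measure_pmf (iid_list k p)) (Cons x -` {ts. j \<le> length (filter Q ts)})
         \<le> ennreal (real (k choose i) * r ^ i) * indicator {x. Q x} x + ennreal (real (k choose j) * r ^ j)"
        using Suc.IH[of i] Suc.IH[of j] unfolding pre by (cases "Q x") (simp_all add: r_def add_increasing2)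
    qed
    also have "\<dots> = ennreal (real (k choose i) * r ^ i) * r + ennreal (real (k choose j) * r ^ j)"
      by (simp add: nn_integral_add nn_integral_cmult_indicator measure_pmf.emeasure_eq_measure r_def
           measure_pmf.prob_space)
    also have "\<dots> = ennreal (real (Suc k choose j) * r ^ j)"
      using Suc r0 by (simp add: ennreal_mult'[symmetric] ennreal_plus[symmetric] algebra_simps del: ennreal_plus)
    finally show ?thesis by (simp add: r_def)
  qed
qed

lemma poisson_choose_sums:
  fixes l :: real
  shows "(\<lambda>k. l ^ k / fact k * exp (-l) * real (k choose D)) sums (l ^ D / fact D)"
proof -
  let ?f = "\<lambda>k. l ^ k / fact k * exp (-l) * real (k choose D)"
  have shift: "?f (i + D) = (l ^ D * exp (-l) / fact D) * (l ^ i /\<^sub>R fact i)" for i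
  proof -
    have "real ((i + D) choose D) = fact (i + D) / (fact D * fact i)"
      by (subst binomial_fact) auto
    then show ?thesis by (simp add: power_add field_simps)
  qed
  have "(\<lambda>i. ?f (i + D)) sums ((l ^ D * exp (-l) / fact D) * exp l)"
    unfolding shift by (intro sums_mult exp_converges)
  also have "(l ^ D * exp (-l) / fact D) * exp l = l ^ D / fact D"
    by (simp add: exp_minus field_simps)
  finally show ?thesis
    using sums_zero_iff_shift[of D ?f] by simp
qed

lemma nn_integral_poisson_choose:
  fixes l :: real
  assumes "l > 0"
  shows "(\<integral>\<^sup>+k. ennreal (real (k choose D)) \<partial>measure_pmf (poisson_pmf l)) = ennreal (l ^ D / fact D)"
proof -
  have "(\<integral>\<^sup>+k. ennreal (real (k choose D)) \<partial>measure_pmf (poisson_pmf l))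
      = (\<Sum>k. ennreal (l ^ k / fact k * exp (-l) * real (k choose D)))"
    using assms by (simp add: nn_integral_measure_pmf ennreal_mult'[symmetric] nn_integral_count_space_nat)
  also have "\<dots> = ennreal (l ^ D / fact D)"
    using assms poisson_choose_sums[of l D] by (intro sums_unique[symmetric]) (subst sums_ennreal; auto)
  finally show ?thesis .
qed

lemma p_h_nonneg: "0 \<le> p_h D lam h"
  by (simp add: p_h_def)

text \<open>Union bound over the \<open>k choose D\<close> sets of children of the root, combined with
  \<open>E (Poi \<lambda> choose D) = \<lambda>\<^sup>D / D!\<close>.\<close>
lemma p_h_Suc_le:
  assumes "lam > 0"
  shows "p_h D lam (Suc h) \<le> lam ^ D / fact D * p_h D lam h ^ D"
proof -
  define r where "r = p_h D lam h"
  have r0: "0 \<le> r" by (simp add: r_def p_h_nonneg)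
  have pre: "Node -` {t. contains_complete D (Suc h) t} = {ts. D \<le> length (filter (contains_complete D h) ts)}"
    by auto
  have "emeasure (measure_pmf (gw lam (Suc h))) {t. contains_complete D (Suc h) t}
      = (\<integral>\<^sup>+k. emeasure (measure_pmf (iid_list k (gw lam h))) {ts. D \<le> length (filter (contains_complete D h) ts)} \<partial>measure_pmf (poisson_pmf lam))"
    using assms by (simp add: poi_def map_pmf_rep_eq emeasure_distr pre)
  also have "\<dots> \<le> (\<integral>\<^sup>+k. ennreal (r ^ D) * ennreal (real (k choose D)) \<partial>measure_pmf (poisson_pmf lam))"
    using emeasure_iid_list_count_ge[of _ "gw lam h" D "contains_complete D h"] r0
    by (intro nn_integral_mono) (simp add: r_def p_h_def ennreal_mult'[symmetric] mult.commute)
  also have "\<dots> = ennreal (r ^ D) * ennreal (lam ^ D / fact D)"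
    using assms by (simp add: nn_integral_cmult nn_integral_poisson_choose)
  also have "\<dots> = ennreal (lam ^ D / fact D * r ^ D)"
    using r0 assms by (simp add: ennreal_mult'[symmetric] mult.commute)
  finally show ?thesis
    using r0 assms by (simp add: p_h_def r_def measure_pmf.emeasure_eq_measure)
qed

lemma p_h_doubly_exponential:
  assumes D: "D > 1" and lam: "lam > 0"
    and \<theta>: "0 < \<theta>" "\<theta> \<le> 1" "lam ^ D / fact D * \<theta> \<le> 1"
    and h0: "p_h D lam h0 \<le> \<theta> * exp (-1)"
  shows "p_h D lam (h0 + j) \<le> \<theta> * exp (- (real D ^ j))"
proof (induction j)
  case 0
  then show ?case using h0 by simp
next
  case (Suc j)
  define A where "A = lam ^ D / fact D"
  have A0: "A > 0" using lam by (simp add: A_def)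
  have "A * \<theta> ^ (D - 1) \<le> A * \<theta>"
    using power_decreasing[of 1 "D - 1" \<theta>] \<theta> D A0 by (intro mult_left_mono) auto
  also have "\<dots> \<le> 1" using \<theta> by (simp add: A_def)
  finally have A\<theta>: "A * \<theta> ^ (D - 1) \<le> 1" .
  let ?s = "real D ^ j"
  have "p_h D lam (h0 + Suc j) \<le> A * p_h D lam (h0 + j) ^ D"
    using p_h_Suc_le[OF lam, of D "h0 + j"] by (simp add: A_def)
  also have "\<dots> \<le> A * (\<theta> * exp (- ?s)) ^ D"
    using Suc.IH A0 p_h_nonneg by (intro mult_left_mono power_mono) auto
  also have "\<dots> = (A * \<theta> ^ (D - 1)) * (\<theta> * exp (- ?s) ^ D)"
    using D by (simp add: power_mult_distrib algebra_simps flip: power_Suc)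
  also have "\<dots> \<le> \<theta> * exp (- ?s) ^ D"
    using A\<theta> \<theta> mult_right_mono[OF A\<theta>, of "\<theta> * exp (- ?s) ^ D"] by simp
  also have "exp (- ?s) ^ D = exp (- (real D ^ Suc j))"
    by (simp add: exp_of_nat_mult[symmetric] algebra_simps)
  finally show ?case by simp
qed

lemma power_le_of_p_h_gt:
  assumes D: "D > 1" and lam: "lam > 0"
    and \<theta>: "0 < \<theta>" "\<theta> \<le> 1" "lam ^ D / fact D * \<theta> \<le> 1"
    and h0: "p_h D lam h0 \<le> \<theta> * exp (-1)"
    and n: "3 \<le> n" and h: "ln (real n) / real n < p_h D lam h"
  shows "real D ^ h \<le> real D ^ h0 * ((\<bar>ln \<theta>\<bar> + 1) * (ln (real n) + 1))"
proof -
  have lnn: "1 \<le> ln (real n)"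
  proof -
    have "exp 1 \<le> real n" using exp_le n by linarith
    then show ?thesis using n by (subst ln_ge_iff) auto
  qed
  have one_le: "1 \<le> (\<bar>ln \<theta>\<bar> + 1) * (ln (real n) + 1)"
    using mult_mono[of 1 "\<bar>ln \<theta>\<bar> + 1" 1 "ln (real n) + 1"] lnn by simp
  show ?thesis
  proof (cases "h0 \<le> h")
    case True
    define s where "s = real D ^ (h - h0)"
    have "ln (real n) / real n < \<theta> * exp (- s)"
      using h p_h_doubly_exponential[OF D lam \<theta> h0, of "h - h0"] True by (simp add: s_def)
    then have "ln (ln (real n) / real n) < ln (\<theta> * exp (- s))"
      using lnn n \<theta> by (subst ln_less_cancel_iff) auto
    then have "ln (ln (real n)) - ln (real n) < ln \<theta> - s"
      using lnn n \<theta> by (simp add: ln_div ln_mult)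
    moreover have "0 \<le> ln (ln (real n))" using lnn by simp
    moreover have "0 \<le> \<bar>ln \<theta>\<bar> * ln (real n)" using lnn by simp
    ultimately have "s \<le> (\<bar>ln \<theta>\<bar> + 1) * (ln (real n) + 1)"
      by (simp add: algebra_simps)
    then have "real D ^ h0 * s \<le> real D ^ h0 * ((\<bar>ln \<theta>\<bar> + 1) * (ln (real n) + 1))"
      by (intro mult_left_mono) auto
    then show ?thesis using True by (simp add: s_def flip: power_add)
  next
    case False
    have "real D ^ h \<le> real D ^ h0" using False D by (intro power_increasing) auto
    also have "\<dots> \<le> real D ^ h0 * ((\<bar>ln \<theta>\<bar> + 1) * (ln (real n) + 1))"
      using one_le mult_left_mono[OF one_le, of "real D ^ h0"] by simp
    finally show ?thesis .
  qed
qed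

lemma power_Sup_le:
  fixes X :: "nat set" and D :: nat
  assumes D: "D > 1" and B: "1 \<le> B" and bound: "\<And>h. h \<in> X \<Longrightarrow> real D ^ h \<le> B"
  shows "real D ^ Sup X \<le> B"
proof -
  have "X \<subseteq> {..nat \<lceil>B\<rceil>}"
  proof
    fix h assume "h \<in> X"
    have "real h < 2 ^ h" by (rule of_nat_less_two_power)
    also have "\<dots> \<le> real D ^ h" using D by (intro power_mono) auto
    finally have "real h \<le> B" using bound[OF \<open>h \<in> X\<close>] by linarith
    then show "h \<in> {..nat \<lceil>B\<rceil>}" by (simp add: le_nat_iff le_ceiling_iff)
  qed
  then have "finite X" by (rule finite_subset) simp
  then have "Sup X \<in> insert 0 X" by (auto simp: Sup_nat_def)
  then show ?thesis using B bound by auto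
qed

lemma power_h_low_le_ln:
  assumes D: "D > 1" and lam: "lam > 0"
  shows "\<exists>C>0. \<forall>\<^sub>F n in sequentially. real D ^ h_low D lam n \<le> C * (ln (real n) + 1)"
proof -
  define \<theta> where "\<theta> = min 1 (fact D / lam ^ D)"
  have \<theta>: "0 < \<theta>" "\<theta> \<le> 1" "lam ^ D / fact D * \<theta> \<le> 1"
    using lam by (auto simp: \<theta>_def min_def field_simps)
  show ?thesis
  proof (cases "\<exists>h0. p_h D lam h0 \<le> \<theta> * exp (-1)")
    case False
    txt \<open>Then \<open>h_low D lam n\<close> is eventually \<open>Sup {h. h > 0}\<close>, which for an infinite set of naturals
      is an unspecified constant.\<close>
    have "\<forall>\<^sub>F n in sequentially. ln (real n) / real n < \<theta> * exp (-1)"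
      by (rule order_tendstoD(2)) (real_asymp, use \<theta> in simp)
    then have "\<forall>\<^sub>F n in sequentially. h_low D lam n = Sup {h. h > 0}"
    proof eventually_elim
      case (elim n)
      have "{h. 0 < h \<and> ln (real n) / real n < p_h D lam h} = {h. 0 < h}"
        using False elim by (auto simp: not_le intro: less_trans)
      then show ?case by (simp add: h_low_def)
    qed
    then have "\<forall>\<^sub>F n in sequentially. real D ^ h_low D lam n \<le> real D ^ Sup {h::nat. h > 0} * (ln (real n) + 1)"
      using eventually_ge_at_top[of 1] by eventually_elim (use D in auto)
    then show ?thesis using D by (intro exI[of _ "real D ^ Sup {h::nat. h > 0}"]) auto
  next
    case True
    then obtain h0 where h0: "p_h D lam h0 \<le> \<theta> * exp (-1)" by blast
    define C where "C = real D ^ h0 * (\<bar>ln \<theta>\<bar> + 1)"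
    have "\<forall>\<^sub>F n in sequentially. real D ^ h_low D lam n \<le> C * (ln (real n) + 1)"
      using eventually_ge_at_top[of 3]
    proof eventually_elim
      case (elim n)
      have "1 \<le> C * (ln (real n) + 1)" using D elim by (simp add: C_def one_le_power mult_ge1_I)
      then show ?case
        using power_le_of_p_h_gt[OF D lam \<theta> h0 elim]
        unfolding h_low_def by (intro power_Sup_le[OF D]) (auto simp: C_def mult.assoc)
    qed
    moreover have "C > 0" using D by (simp add: C_def add_pos_nonneg)
    ultimately show ?thesis by blast
  qed
qed

lemma tree_verts_eq_UN_length:
  "tree_verts D h = (\<Union>i\<le>h. {w. set w \<subseteq> {..<D} \<and> length w = i})"
  by (auto simp: tree_verts_def)

lemma finite_tree_verts: "finite (tree_verts D h)"
  unfolding tree_verts_eq_UN_length by (simp add: finite_lists_length_eq)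

lemma card_tree_verts: "card (tree_verts D h) = (\<Sum>i\<le>h. D ^ i)"
  unfolding tree_verts_eq_UN_length
  by (subst card_UN_disjoint) (auto intro: finite_lists_length_eq simp: card_lists_length_eq)

lemma card_tree_verts_le:
  assumes "D \<ge> 2"
  shows "real (card (tree_verts D h)) \<le> 2 * real D ^ h"
proof -
  have "(\<Sum>i\<le>h. real D ^ i) \<le> 2 * real D ^ h"
  proof (induction h)
    case (Suc h)
    then have "(\<Sum>i\<le>Suc h. real D ^ i) \<le> 2 * real D ^ h + real D ^ Suc h" by simp
    also have "\<dots> \<le> 2 * real D ^ Suc h" using assms by simp
    finally show ?case .
  qed simp
  then show ?thesis by (simp add: card_tree_verts)
qed

lemma power_le_of_depth_hypothesis:
  assumes D: "D > 1"
    and hyp: "real h \<le> real hl - ln (real hl) / ln (real D) + ln (1 - 1 / real D) / ln (real D)"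
  shows "1 \<le> hl" and "real D ^ h \<le> real D ^ hl / real hl"
proof -
  have lnD: "ln (real D) > 0" using D by simp
  have "ln (1 - 1 / real D) < 0" using D by (intro ln_less_zero) auto
  then have neg: "ln (1 - 1 / real D) / ln (real D) < 0" using lnD by (simp add: divide_neg_pos)
  show hl1: "1 \<le> hl"
  proof (rule ccontr)
    assume "\<not> 1 \<le> hl"
    then have "hl = 0" by simp
    then show False using hyp neg by simp
  qed
  have "real h \<le> real hl - ln (real hl) / ln (real D)" using hyp neg by linarith
  then have "real h * ln (real D) \<le> real hl * ln (real D) - ln (real hl)"
    using lnD by (simp add: field_simps)
  then have "exp (real h * ln (real D)) \<le> exp (real hl * ln (real D) - ln (real hl))" by simp
  then show "real D ^ h \<le> real D ^ hl / real hl"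
    using hl1 D by (simp add: exp_diff exp_of_nat_mult)
qed

lemma card_tree_verts_le_ln:
  fixes h :: "nat \<Rightarrow> nat"
  assumes D: "D > 1" and lam: "0 < lam" and \<epsilon>: "\<epsilon> > 0"
    and hyp: "\<forall>\<^sub>F n in sequentially.
           real (h n) \<le> real (h_low D lam n) - ln (real (h_low D lam n)) / ln (real D)
                          + ln (1 - 1 / real D) / ln (real D)"
  shows "\<exists>a. \<forall>\<^sub>F n in sequentially. real (card (tree_verts D (h n))) \<le> a + \<epsilon> * ln (real n)"
proof -
  obtain C where C: "C > 0" "\<forall>\<^sub>F n in sequentially. real D ^ h_low D lam n \<le> C * (ln (real n) + 1)"
    using power_h_low_le_ln[OF D lam] by blast
  define H :: nat where "H = nat \<lceil>2 * C / \<epsilon>\<rceil> + 1"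
  have "2 * C / \<epsilon> \<le> real H" unfolding H_def by linarith
  then have H: "1 \<le> real H" "2 * C / real H \<le> \<epsilon>"
    using \<epsilon> by (auto simp: H_def field_simps)
  have "\<forall>\<^sub>F n in sequentially. real (card (tree_verts D (h n))) \<le> 2 * real D ^ H + \<epsilon> + \<epsilon> * ln (real n)"
    using hyp C(2) eventually_ge_at_top[of 1]
  proof eventually_elim
    case (elim n)
    define hl where "hl = h_low D lam n"
    define L where "L = ln (real n)"
    have L: "0 \<le> L" using elim by (simp add: L_def)
    note hl = power_le_of_depth_hypothesis[OF D elim(1)[folded hl_def]]
    have "real (card (tree_verts D (h n))) \<le> 2 * (real D ^ hl / real hl)"
      using card_tree_verts_le[of D "h n"] D hl(2) by linarith
    also have "\<dots> \<le> 2 * real D ^ H + \<epsilon> * (L + 1)"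
    proof (cases "hl \<le> H")
      case True
      have "real D ^ hl / real hl \<le> real D ^ hl"
        using hl(1) by (simp add: divide_le_eq mult_le_cancel_left1)
      also have "\<dots> \<le> real D ^ H" using True D by (intro power_increasing) auto
      finally have "real D ^ hl / real hl \<le> real D ^ H" .
      then show ?thesis using \<epsilon> L by (simp add: add_increasing2)
    next
      case False
      have "real D ^ hl / real hl \<le> C * (L + 1) / real H"
        using elim(2) hl(1) False H(1) C(1) L
        by (intro frac_le) (auto simp: hl_def L_def)
      also have "\<dots> = (2 * C / real H) * (L + 1) / 2" by simp
      also have "\<dots> \<le> \<epsilon> * (L + 1) / 2" using H L by (intro divide_right_mono mult_right_mono) auto
      finally have "2 * (real D ^ hl / real hl) \<le> \<epsilon> * (L + 1)" by (simp add: mult.commute)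
      moreover have "0 \<le> 2 * real D ^ H" by simp
      ultimately show ?thesis by linarith
    qed
    finally show ?case by (simp add: L_def algebra_simps)
  qed
  then show ?thesis by blast
qed

lemma exp_growth_sublogarithmic_tendsto_0:
  fixes k :: "nat \<Rightarrow> nat" and M :: real
  assumes M: "M \<ge> 1"
    and k: "\<And>\<epsilon>. \<epsilon> > 0 \<Longrightarrow> \<exists>a. \<forall>\<^sub>F n in sequentially. real (k n) \<le> a + \<epsilon> * ln (real n)"
  shows "(\<lambda>n. real (k n) * M ^ k n / real n) \<longlonglongrightarrow> 0"
proof -
  define \<epsilon> where "\<epsilon> = 1 / (2 * (ln M + 1))"
  have lnM: "0 \<le> ln M" using M by simp
  have \<epsilon>: "\<epsilon> > 0" "\<epsilon> * ln M \<le> 1 / 2" using lnM by (auto simp: \<epsilon>_def field_simps)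
  obtain a where a: "\<forall>\<^sub>F n in sequentially. real (k n) \<le> a + \<epsilon> * ln (real n)"
    using k[OF \<epsilon>(1)] by blast
  define E where "E = exp (a * ln M)"
  define g where "g = (\<lambda>n::nat. E * a * (1 / sqrt (real n)) + E * \<epsilon> * (ln (real n) / sqrt (real n)))"
  have "(\<lambda>n::nat. 1 / sqrt (real n)) \<longlonglongrightarrow> 0" "(\<lambda>n::nat. ln (real n) / sqrt (real n)) \<longlonglongrightarrow> 0"
    by real_asymp+
  then have g: "g \<longlonglongrightarrow> 0"
    unfolding g_def by (intro tendsto_add_zero tendsto_mult_right_zero)
  have "\<forall>\<^sub>F n in sequentially. real (k n) * M ^ k n / real n \<le> g n"
    using a eventually_ge_at_top[of 1]
  proof eventually_elim
    case (elim n)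
    define L where "L = ln (real n)"
    have L: "0 \<le> L" using elim by (simp add: L_def)
    have "M ^ k n = exp (real (k n) * ln M)" using M by (simp add: exp_of_nat_mult)
    also have "\<dots> \<le> exp ((a + \<epsilon> * L) * ln M)"
      using elim(1) lnM by (simp add: L_def mult_right_mono)
    also have "\<dots> = E * exp (\<epsilon> * ln M * L)" by (simp add: E_def algebra_simps exp_add)
    also have "\<dots> \<le> E * exp (L / 2)"
      using \<epsilon>(2) L mult_right_mono[OF \<epsilon>(2) L] by (simp add: E_def)
    also have "exp (L / 2) = sqrt (real n)"
    proof -
      have "exp (L / 2) = real n powr (1 / 2)" using elim(2) by (simp add: L_def powr_def)
      then show ?thesis by (simp add: powr_half_sqrt)
    qed
    finally have Mk: "M ^ k n \<le> E * sqrt (real n)" .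
    have "real (k n) * M ^ k n / real n \<le> (a + \<epsilon> * L) * (E * sqrt (real n)) / real n"
      using elim(1) Mk M by (intro divide_right_mono mult_mono) (auto simp: L_def)
    also have "\<dots> = (E * a + E * \<epsilon> * L) * (sqrt (real n) / real n)"
      by (simp add: algebra_simps add_divide_distrib)
    also have "sqrt (real n) / real n = 1 / sqrt (real n)"
      using elim(2) by (simp add: field_simps)
    finally show ?case by (simp add: g_def L_def algebra_simps)
  qed
  moreover have "\<forall>\<^sub>F n in sequentially. 0 \<le> real (k n) * M ^ k n / real n"
    using M by simp
  ultimately show ?thesis by (intro tendsto_sandwich[OF _ _ tendsto_const g])
qed

definition edge_pmf :: "nat \<Rightarrow> real \<Rightarrow> (nat set \<Rightarrow> bool) pmf" where
  "edge_pmf n q = Pi_pmf (pairs n) False (\<lambda>_. bernoulli_pmf q)"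

definition planted_edge_pmf :: "nat \<Rightarrow> real \<Rightarrow> nat set set \<Rightarrow> (nat set \<Rightarrow> bool) pmf" where
  "planted_edge_pmf n q S =
     Pi_pmf (pairs n) False (\<lambda>e. if e \<in> S then return_pmf True else bernoulli_pmf q)"

definition graph_of :: "nat \<Rightarrow> (nat set \<Rightarrow> bool) \<Rightarrow> nat set set" where
  "graph_of n f = {e \<in> pairs n. f e}"

definition edge_configs :: "nat \<Rightarrow> (nat set \<Rightarrow> bool) set" where
  "edge_configs n = PiE_dflt (pairs n) False (\<lambda>_. UNIV)"

definition likelihood_ratio :: "real \<Rightarrow> ('s \<Rightarrow> nat set set) \<Rightarrow> 's set \<Rightarrow> (nat set \<Rightarrow> bool) \<Rightarrow> real" where
  "likelihood_ratio q S I f = (\<Sum>\<sigma>\<in>I. of_bool (S \<sigma> \<subseteq> {e. f e}) / q ^ card (S \<sigma>)) / card I"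

lemma finite_pairs: "finite (pairs n)"
  by (rule finite_subset[of _ "Pow {..<n}"]) (auto simp: pairs_def)

lemma finite_edge_configs: "finite (edge_configs n)"
  unfolding edge_configs_def using finite_pairs by (intro finite_PiE_dflt) auto

lemma set_pmf_edge_pmf: "set_pmf (edge_pmf n q) \<subseteq> edge_configs n"
  unfolding edge_pmf_def edge_configs_def PiE_dflt_def
  using set_Pi_pmf_subset[OF finite_pairs[of n], of False "\<lambda>_. bernoulli_pmf q"] by blast

lemma set_pmf_planted_edge_pmf: "set_pmf (planted_edge_pmf n q S) \<subseteq> edge_configs n"
  unfolding planted_edge_pmf_def edge_configs_def PiE_dflt_def
  using set_Pi_pmf_subset[OF finite_pairs[of n], of False "\<lambda>e. if e \<in> S then return_pmf True else bernoulli_pmf q"]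
  by blast

lemma measure_pmf_eq_sum_pmf_superset:
  assumes "set_pmf M \<subseteq> \<Omega>" "finite \<Omega>"
  shows "measure_pmf.prob M X = (\<Sum>x\<in>X \<inter> \<Omega>. pmf M x)"
proof -
  have "measure_pmf.prob M X = measure_pmf.prob M (X \<inter> set_pmf M)" by (simp add: measure_Int_set_pmf)
  also have "X \<inter> set_pmf M = (X \<inter> \<Omega>) \<inter> set_pmf M" using assms by auto
  also have "measure_pmf.prob M \<dots> = measure_pmf.prob M (X \<inter> \<Omega>)" by (simp add: measure_Int_set_pmf)
  also have "\<dots> = (\<Sum>x\<in>X \<inter> \<Omega>. pmf M x)" using assms(2) by (intro measure_measure_pmf_finite) auto
  finally show ?thesis .
qed

lemma erdos_renyi_eq_map_graph_of: "erdos_renyi n q = map_pmf (graph_of n) (edge_pmf n q)"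
  by (simp add: erdos_renyi_def edge_pmf_def graph_of_def[abs_def])

lemma map_graph_of_planted_edge_pmf:
  assumes "S \<subseteq> pairs n"
  shows "map_pmf (graph_of n) (planted_edge_pmf n q S) = map_pmf (\<lambda>f. graph_of n f \<union> S) (edge_pmf n q)"
proof -
  have "planted_edge_pmf n q S
      = Pi_pmf (pairs n) False (\<lambda>e. bind_pmf (bernoulli_pmf q) (\<lambda>b. return_pmf (b \<or> e \<in> S)))"
    unfolding planted_edge_pmf_def by (intro Pi_pmf_cong) (auto simp: bind_return_pmf')
  also have "\<dots> = bind_pmf (edge_pmf n q) (\<lambda>f. Pi_pmf (pairs n) False (\<lambda>e. return_pmf (f e \<or> e \<in> S)))"
    unfolding edge_pmf_def by (rule Pi_pmf_bind[OF finite_pairs])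
  also have "\<dots> = map_pmf (\<lambda>f e. if e \<in> pairs n then f e \<or> e \<in> S else False) (edge_pmf n q)"
    by (simp add: finite_pairs map_pmf_def)
  finally have "map_pmf (graph_of n) (planted_edge_pmf n q S)
      = map_pmf (graph_of n \<circ> (\<lambda>f e. if e \<in> pairs n then f e \<or> e \<in> S else False)) (edge_pmf n q)"
    by (simp add: pmf.map_comp)
  also have "graph_of n \<circ> (\<lambda>f e. if e \<in> pairs n then f e \<or> e \<in> S else False) = (\<lambda>f. graph_of n f \<union> S)"
    using assms by (auto simp: graph_of_def fun_eq_iff)
  finally show ?thesis .
qed

lemma pmf_edge_pmf:
  assumes "f \<in> edge_configs n"
  shows "pmf (edge_pmf n q) f = (\<Prod>e\<in>pairs n. pmf (bernoulli_pmf q) (f e))"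
  unfolding edge_pmf_def using assms
  by (subst pmf_Pi') (auto simp: finite_pairs edge_configs_def PiE_dflt_def)

text \<open>Each planted edge is present with probability 1 instead of \<open>q\<close>.\<close>
lemma pmf_planted_edge_pmf:
  assumes f: "f \<in> edge_configs n" and S: "S \<subseteq> pairs n" and q: "0 < q" "q \<le> 1"
  shows "pmf (planted_edge_pmf n q S) f = pmf (edge_pmf n q) f * of_bool (S \<subseteq> {e. f e}) / q ^ card S"
proof -
  have fin: "finite S" using S finite_pairs by (rule finite_subset)
  have split: "pairs n = S \<union> (pairs n - S)" using S by auto
  let ?rest = "\<Prod>e\<in>pairs n - S. pmf (bernoulli_pmf q) (f e)"
  have "pmf (planted_edge_pmf n q S) f
      = (\<Prod>e\<in>pairs n. pmf (if e \<in> S then return_pmf True else bernoulli_pmf q) (f e))"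
    unfolding planted_edge_pmf_def using f
    by (subst pmf_Pi') (auto simp: finite_pairs edge_configs_def PiE_dflt_def)
  also have "\<dots> = (\<Prod>e\<in>S. pmf (return_pmf True) (f e)) * ?rest"
    by (subst split, subst prod.union_disjoint) (auto intro: prod.cong simp: fin finite_pairs)
  also have "(\<Prod>e\<in>S. pmf (return_pmf True) (f e)) = of_bool (S \<subseteq> {e. f e})"
  proof (cases "S \<subseteq> {e. f e}")
    case True
    then have "(\<Prod>e\<in>S. pmf (return_pmf True) (f e)) = 1"
      by (intro prod.neutral) (auto simp: indicator_def)
    with True show ?thesis by simp
  next
    case False
    then obtain e where "e \<in> S" "\<not> f e" by auto
    then have "(\<Prod>e\<in>S. pmf (return_pmf True) (f e)) = 0"
      by (intro prod_zero[OF fin] bexI[of _ e]) (auto simp: indicator_def)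
    with False show ?thesis by simp
  qed
  finally have planted: "pmf (planted_edge_pmf n q S) f = of_bool (S \<subseteq> {e. f e}) * ?rest" .
  show ?thesis
  proof (cases "S \<subseteq> {e. f e}")
    case True
    have "pmf (edge_pmf n q) f = (\<Prod>e\<in>S. pmf (bernoulli_pmf q) (f e)) * ?rest"
      unfolding pmf_edge_pmf[OF f] by (subst split, subst prod.union_disjoint) (auto simp: fin finite_pairs)
    also have "(\<Prod>e\<in>S. pmf (bernoulli_pmf q) (f e)) = q ^ card S"
      using True q by (subst prod.cong[OF refl, of _ _ "\<lambda>_. q"]) auto
    finally show ?thesis using planted True q by simp
  next
    case False
    then show ?thesis using planted by simp
  qed
qed

lemma sum_pmf_edge_pmf_subset:
  assumes "T \<subseteq> pairs n" "0 \<le> q" "q \<le> 1"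
  shows "(\<Sum>f\<in>edge_configs n. pmf (edge_pmf n q) f * of_bool (T \<subseteq> {e. f e})) = q ^ card T"
proof -
  have "{f. T \<subseteq> {e. f e}} \<inter> edge_configs n = {f \<in> edge_configs n. T \<subseteq> {e. f e}}" by auto
  then have "(\<Sum>f\<in>edge_configs n. pmf (edge_pmf n q) f * of_bool (T \<subseteq> {e. f e}))
      = (\<Sum>f\<in>{f. T \<subseteq> {e. f e}} \<inter> edge_configs n. pmf (edge_pmf n q) f)"
    by (auto simp: sum.inter_filter[OF finite_edge_configs] intro!: sum.cong)
  also have "\<dots> = measure_pmf.prob (edge_pmf n q) {f. T \<subseteq> {e. f e}}"
    by (rule measure_pmf_eq_sum_pmf_superset[OF set_pmf_edge_pmf finite_edge_configs, symmetric])
  also have "{f. T \<subseteq> {e. f e}} = Pi (pairs n) (\<lambda>e. if e \<in> T then {True} else UNIV)"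
    using assms(1) by (auto simp: Pi_def)
  also have "measure_pmf.prob (edge_pmf n q) \<dots>
      = (\<Prod>e\<in>pairs n. measure_pmf.prob (bernoulli_pmf q) (if e \<in> T then {True} else UNIV))"
    unfolding edge_pmf_def by (rule measure_Pi_pmf_Pi[OF finite_pairs])
  also have "\<dots> = (\<Prod>e\<in>pairs n. if e \<in> T then q else 1)"
    using assms by (intro prod.cong) (auto simp: measure_pmf_single)
  also have "\<dots> = q ^ card T"
    using assms(1) finite_subset[OF assms(1) finite_pairs] finite_pairs
    by (simp add: prod.If_cases Int_absorb1 Int_absorb2)
  finally show ?thesis .
qed

lemma sum_pmf_edge_pmf:
  assumes "0 \<le> q" "q \<le> 1"
  shows "(\<Sum>f\<in>edge_configs n. pmf (edge_pmf n q) f) = 1"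
  using sum_pmf_edge_pmf_subset[of "{}" n q] assms by simp

lemma planted_mixture_eq_bind_planted_edge_pmf:
  assumes I: "finite I" "I \<noteq> {}" and S: "\<And>\<sigma>. \<sigma> \<in> I \<Longrightarrow> S \<sigma> \<subseteq> pairs n"
  shows "bind_pmf (erdos_renyi n q) (\<lambda>G0. map_pmf (\<lambda>\<sigma>. G0 \<union> S \<sigma>) (pmf_of_set I))
       = bind_pmf (pmf_of_set I) (\<lambda>\<sigma>. map_pmf (graph_of n) (planted_edge_pmf n q (S \<sigma>)))"
proof -
  have "bind_pmf (erdos_renyi n q) (\<lambda>G0. map_pmf (\<lambda>\<sigma>. G0 \<union> S \<sigma>) (pmf_of_set I))
      = bind_pmf (edge_pmf n q) (\<lambda>f. bind_pmf (pmf_of_set I) (\<lambda>\<sigma>. return_pmf (graph_of n f \<union> S \<sigma>)))"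
    unfolding erdos_renyi_eq_map_graph_of bind_map_pmf by (simp add: map_pmf_def)
  also have "\<dots> = bind_pmf (pmf_of_set I) (\<lambda>\<sigma>. bind_pmf (edge_pmf n q) (\<lambda>f. return_pmf (graph_of n f \<union> S \<sigma>)))"
    by (rule bind_commute_pmf)
  also have "\<dots> = bind_pmf (pmf_of_set I) (\<lambda>\<sigma>. map_pmf (graph_of n) (planted_edge_pmf n q (S \<sigma>)))"
  proof (intro bind_pmf_cong refl)
    fix \<sigma> assume "\<sigma> \<in> set_pmf (pmf_of_set I)"
    then have "map_pmf (graph_of n) (planted_edge_pmf n q (S \<sigma>)) = map_pmf (\<lambda>f. graph_of n f \<union> S \<sigma>) (edge_pmf n q)"
      using I S by (simp add: map_graph_of_planted_edge_pmf)
    then show "bind_pmf (edge_pmf n q) (\<lambda>f. return_pmf (graph_of n f \<union> S \<sigma>))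
        = map_pmf (graph_of n) (planted_edge_pmf n q (S \<sigma>))"
      by (simp add: map_pmf_def)
  qed
  finally show ?thesis .
qed

lemma measure_pmf_bind_pmf_of_set:
  assumes I: "finite I" "I \<noteq> {}" and Q: "\<And>\<sigma>. \<sigma> \<in> I \<Longrightarrow> set_pmf (Q \<sigma>) \<subseteq> \<Omega>" and \<Omega>: "finite \<Omega>"
  shows "measure_pmf.prob (bind_pmf (pmf_of_set I) Q) A = (\<Sum>\<sigma>\<in>I. measure_pmf.prob (Q \<sigma>) A) / card I"
proof -
  have "set_pmf (bind_pmf (pmf_of_set I) Q) \<subseteq> \<Omega>" using I Q by auto
  then have "measure_pmf.prob (bind_pmf (pmf_of_set I) Q) A = (\<Sum>x\<in>A \<inter> \<Omega>. pmf (bind_pmf (pmf_of_set I) Q) x)"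
    using \<Omega> by (rule measure_pmf_eq_sum_pmf_superset)
  also have "\<dots> = (\<Sum>\<sigma>\<in>I. (\<Sum>x\<in>A \<inter> \<Omega>. pmf (Q \<sigma>) x)) / card I"
    using I by (simp add: pmf_bind_pmf_of_set sum_divide_distrib[symmetric] sum.swap[of _ _ I])
  also have "\<dots> = (\<Sum>\<sigma>\<in>I. measure_pmf.prob (Q \<sigma>) A) / card I"
    using Q \<Omega> by (intro arg_cong2[where f="(/)"] sum.cong refl measure_pmf_eq_sum_pmf_superset[symmetric]) auto
  finally show ?thesis .
qed

lemma power_card_Un_div:
  fixes q :: real
  assumes "finite S" "finite S'" "q > 0"
  shows "q ^ card (S \<union> S') / (q ^ card S * q ^ card S') = (1 / q) ^ card (S \<inter> S')"
proof -
  have "q ^ card (S \<union> S') * q ^ card (S \<inter> S') = q ^ card S * q ^ card S'"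
    using card_Un_Int[OF assms(1,2)] by (simp flip: power_add)
  then show ?thesis using assms by (simp add: field_simps power_one_over)
qed

lemma prob_planted_mixture_eq_sum_likelihood_ratio:
  assumes I: "finite I" "I \<noteq> {}" and S: "\<And>\<sigma>. \<sigma> \<in> I \<Longrightarrow> S \<sigma> \<subseteq> pairs n" and q: "0 < q" "q \<le> 1"
  shows "measure_pmf.prob (bind_pmf (erdos_renyi n q) (\<lambda>G0. map_pmf (\<lambda>\<sigma>. G0 \<union> S \<sigma>) (pmf_of_set I))) A
       = (\<Sum>f\<in>graph_of n -` A \<inter> edge_configs n. pmf (edge_pmf n q) f * likelihood_ratio q S I f)"
proof -
  let ?X = "graph_of n -` A \<inter> edge_configs n"
  have planted: "measure_pmf.prob (map_pmf (graph_of n) (planted_edge_pmf n q (S \<sigma>))) A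
      = (\<Sum>f\<in>?X. pmf (edge_pmf n q) f * of_bool (S \<sigma> \<subseteq> {e. f e}) / q ^ card (S \<sigma>))" if "\<sigma> \<in> I" for \<sigma>
    using pmf_planted_edge_pmf[OF _ S[OF that] q]
    by (simp add: measure_pmf_eq_sum_pmf_superset[OF set_pmf_planted_edge_pmf finite_edge_configs])
  have "measure_pmf.prob (bind_pmf (erdos_renyi n q) (\<lambda>G0. map_pmf (\<lambda>\<sigma>. G0 \<union> S \<sigma>) (pmf_of_set I))) A
      = measure_pmf.prob (bind_pmf (pmf_of_set I) (\<lambda>\<sigma>. map_pmf (graph_of n) (planted_edge_pmf n q (S \<sigma>)))) A"
    by (simp only: planted_mixture_eq_bind_planted_edge_pmf[OF I S])
  also have "\<dots> = (\<Sum>\<sigma>\<in>I. measure_pmf.prob (map_pmf (graph_of n) (planted_edge_pmf n q (S \<sigma>))) A) / card I"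
    by (rule measure_pmf_bind_pmf_of_set[OF I, where \<Omega>="Pow (pairs n)"]) (auto simp: graph_of_def finite_pairs)
  also have "\<dots> = (\<Sum>\<sigma>\<in>I. \<Sum>f\<in>?X. pmf (edge_pmf n q) f * of_bool (S \<sigma> \<subseteq> {e. f e}) / q ^ card (S \<sigma>)) / card I"
    by (intro arg_cong2[where f="(/)"] sum.cong refl planted)
  also have "\<dots> = (\<Sum>f\<in>?X. pmf (edge_pmf n q) f * likelihood_ratio q S I f)"
    by (simp add: likelihood_ratio_def sum.swap[of _ I] sum_divide_distrib sum_distrib_left)
  finally show ?thesis .
qed

lemma sum_edge_pmf_likelihood_ratio:
  assumes I: "finite I" "I \<noteq> {}" and S: "\<And>\<sigma>. \<sigma> \<in> I \<Longrightarrow> S \<sigma> \<subseteq> pairs n" and q: "0 < q" "q \<le> 1"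
  shows "(\<Sum>f\<in>edge_configs n. pmf (edge_pmf n q) f * likelihood_ratio q S I f) = 1"
proof -
  have "(\<Sum>f\<in>edge_configs n. pmf (edge_pmf n q) f * likelihood_ratio q S I f)
      = (\<Sum>\<sigma>\<in>I. (\<Sum>f\<in>edge_configs n. pmf (edge_pmf n q) f * of_bool (S \<sigma> \<subseteq> {e. f e})) / q ^ card (S \<sigma>)) / card I"
    by (simp add: likelihood_ratio_def sum.swap[of _ I] sum_divide_distrib sum_distrib_left)
  also have "\<dots> = 1"
    using I q by (simp add: sum_pmf_edge_pmf_subset[OF S])
  finally show ?thesis .
qed

lemma sum_edge_pmf_likelihood_ratio_sq:
  assumes I: "finite I" "I \<noteq> {}" and S: "\<And>\<sigma>. \<sigma> \<in> I \<Longrightarrow> S \<sigma> \<subseteq> pairs n" and q: "0 < q" "q \<le> 1"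
  shows "(\<Sum>f\<in>edge_configs n. pmf (edge_pmf n q) f * (likelihood_ratio q S I f)\<^sup>2)
       = (\<Sum>\<sigma>\<in>I. \<Sum>\<sigma>'\<in>I. (1 / q) ^ card (S \<sigma> \<inter> S \<sigma>')) / (real (card I))\<^sup>2"
proof -
  let ?p = "pmf (edge_pmf n q)" and ?a = "\<lambda>\<sigma> f. of_bool (S \<sigma> \<subseteq> {e. f e}) / q ^ card (S \<sigma>)"
  have pair: "(\<Sum>f\<in>edge_configs n. ?p f * (?a \<sigma> f * ?a \<sigma>' f)) = (1 / q) ^ card (S \<sigma> \<inter> S \<sigma>')"
    if "\<sigma> \<in> I" "\<sigma>' \<in> I" for \<sigma> \<sigma>'
  proof -
    have fin: "finite (S \<sigma>)" "finite (S \<sigma>')"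
      using S that finite_pairs by (auto intro: finite_subset)
    have "(\<Sum>f\<in>edge_configs n. ?p f * (?a \<sigma> f * ?a \<sigma>' f))
        = (\<Sum>f\<in>edge_configs n. ?p f * of_bool (S \<sigma> \<union> S \<sigma>' \<subseteq> {e. f e}))
          / (q ^ card (S \<sigma>) * q ^ card (S \<sigma>'))"
      by (simp add: sum_divide_distrib of_bool_conj[symmetric])
    also have "\<dots> = q ^ card (S \<sigma> \<union> S \<sigma>') / (q ^ card (S \<sigma>) * q ^ card (S \<sigma>'))"
      using S that q by (subst sum_pmf_edge_pmf_subset) auto
    also have "\<dots> = (1 / q) ^ card (S \<sigma> \<inter> S \<sigma>')"
      by (rule power_card_Un_div[OF fin q(1)])
    finally show ?thesis .
  qed
  have "(\<Sum>f\<in>edge_configs n. ?p f * (likelihood_ratio q S I f)\<^sup>2)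
      = (\<Sum>f\<in>edge_configs n. (\<Sum>\<sigma>\<in>I. \<Sum>\<sigma>'\<in>I. ?p f * (?a \<sigma> f * ?a \<sigma>' f)) / (real (card I))\<^sup>2)"
  proof (intro sum.cong refl)
    fix f
    have "?p f * (likelihood_ratio q S I f)\<^sup>2
        = ?p f * ((\<Sum>\<sigma>\<in>I. ?a \<sigma> f) * (\<Sum>\<sigma>'\<in>I. ?a \<sigma>' f)) / (real (card I))\<^sup>2"
      by (simp add: likelihood_ratio_def power_divide power2_eq_square)
    also have "(\<Sum>\<sigma>\<in>I. ?a \<sigma> f) * (\<Sum>\<sigma>'\<in>I. ?a \<sigma>' f) = (\<Sum>\<sigma>\<in>I. \<Sum>\<sigma>'\<in>I. ?a \<sigma> f * ?a \<sigma>' f)"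
      by (rule sum_product)
    finally show "?p f * (likelihood_ratio q S I f)\<^sup>2
        = (\<Sum>\<sigma>\<in>I. \<Sum>\<sigma>'\<in>I. ?p f * (?a \<sigma> f * ?a \<sigma>' f)) / (real (card I))\<^sup>2"
      by (simp add: sum_distrib_left)
  qed
  also have "\<dots> = (\<Sum>\<sigma>\<in>I. \<Sum>\<sigma>'\<in>I. \<Sum>f\<in>edge_configs n. ?p f * (?a \<sigma> f * ?a \<sigma>' f)) / (real (card I))\<^sup>2"
    by (simp only: sum_divide_distrib[symmetric] sum.swap[of _ "edge_configs n"])
  also have "\<dots> = (\<Sum>\<sigma>\<in>I. \<Sum>\<sigma>'\<in>I. (1 / q) ^ card (S \<sigma> \<inter> S \<sigma>')) / (real (card I))\<^sup>2"
    by (intro arg_cong2[where f="(/)"] sum.cong refl pair)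
  finally show ?thesis .
qed

lemma abs_sum_le_sqrt_sum_sq:
  fixes p f :: "'a \<Rightarrow> real"
  assumes "finite \<Omega>" "X \<subseteq> \<Omega>" "\<And>x. 0 \<le> p x" "(\<Sum>x\<in>\<Omega>. p x) = 1"
  shows "\<bar>\<Sum>x\<in>X. p x * f x\<bar> \<le> sqrt (\<Sum>x\<in>\<Omega>. p x * (f x)\<^sup>2)"
proof -
  have "\<bar>\<Sum>x\<in>X. p x * f x\<bar> \<le> (\<Sum>x\<in>\<Omega>. sqrt (p x) * (sqrt (p x) * \<bar>f x\<bar>))"
    using assms sum_abs[of "\<lambda>x. p x * f x" X] sum_mono2[of \<Omega> X "\<lambda>x. \<bar>p x * f x\<bar>"]
    by (simp add: abs_mult mult.assoc[symmetric])
  also have "\<dots> \<le> sqrt (\<Sum>x\<in>\<Omega>. p x * (f x)\<^sup>2)"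
  proof (rule real_le_rsqrt)
    have "(\<Sum>x\<in>\<Omega>. sqrt (p x) * (sqrt (p x) * \<bar>f x\<bar>))\<^sup>2
        \<le> (\<Sum>x\<in>\<Omega>. (sqrt (p x))\<^sup>2) * (\<Sum>x\<in>\<Omega>. (sqrt (p x) * \<bar>f x\<bar>)\<^sup>2)"
      by (rule Cauchy_Schwarz_ineq_sum)
    then show "(\<Sum>x\<in>\<Omega>. sqrt (p x) * (sqrt (p x) * \<bar>f x\<bar>))\<^sup>2 \<le> (\<Sum>x\<in>\<Omega>. p x * (f x)\<^sup>2)"
      using assms by (simp add: power_mult_distrib)
  qed
  finally show ?thesis .
qed

lemma prob_planted_mixture_diff_le:
  assumes I: "finite I" "I \<noteq> {}" and S: "\<And>\<sigma>. \<sigma> \<in> I \<Longrightarrow> S \<sigma> \<subseteq> pairs n" and q: "0 < q" "q \<le> 1"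
  shows "\<bar>measure_pmf.prob (bind_pmf (erdos_renyi n q) (\<lambda>G0. map_pmf (\<lambda>\<sigma>. G0 \<union> S \<sigma>) (pmf_of_set I))) A
          - measure_pmf.prob (erdos_renyi n q) A\<bar>
       \<le> sqrt ((\<Sum>\<sigma>\<in>I. \<Sum>\<sigma>'\<in>I. (1 / q) ^ card (S \<sigma> \<inter> S \<sigma>')) / (real (card I))\<^sup>2 - 1)"
proof -
  let ?p = "pmf (edge_pmf n q)" and ?L = "likelihood_ratio q S I"
  have "measure_pmf.prob (erdos_renyi n q) A = (\<Sum>f\<in>graph_of n -` A \<inter> edge_configs n. ?p f)"
    by (simp add: erdos_renyi_eq_map_graph_of measure_pmf_eq_sum_pmf_superset[OF set_pmf_edge_pmf finite_edge_configs])
  then have "measure_pmf.prob (bind_pmf (erdos_renyi n q) (\<lambda>G0. map_pmf (\<lambda>\<sigma>. G0 \<union> S \<sigma>) (pmf_of_set I))) A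
          - measure_pmf.prob (erdos_renyi n q) A
      = (\<Sum>f\<in>graph_of n -` A \<inter> edge_configs n. ?p f * (?L f - 1))"
    by (simp add: prob_planted_mixture_eq_sum_likelihood_ratio[OF I S q] algebra_simps sum_subtractf)
  also have "\<bar>\<dots>\<bar> \<le> sqrt (\<Sum>f\<in>edge_configs n. ?p f * (?L f - 1)\<^sup>2)"
    using q by (intro abs_sum_le_sqrt_sum_sq finite_edge_configs sum_pmf_edge_pmf) auto
  also have "(\<Sum>f\<in>edge_configs n. ?p f * (?L f - 1)\<^sup>2)
      = (\<Sum>f\<in>edge_configs n. ?p f * (?L f)\<^sup>2) - 2 * (\<Sum>f\<in>edge_configs n. ?p f * ?L f)
        + (\<Sum>f\<in>edge_configs n. ?p f)"
    by (simp add: power2_diff algebra_simps sum.distrib sum_subtractf sum_distrib_left)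
  finally show ?thesis
    using q by (simp add: sum_edge_pmf_likelihood_ratio_sq[OF I S q] sum_edge_pmf_likelihood_ratio[OF I S q]
        sum_pmf_edge_pmf)
qed

definition dependent_choices :: "('a \<Rightarrow> ('a \<Rightarrow> 'b) \<Rightarrow> 'b set) \<Rightarrow> 'a set \<Rightarrow> ('a \<Rightarrow> 'b) set" where
  "dependent_choices A B = {\<phi> \<in> extensional B. \<forall>u\<in>B. \<phi> u \<in> A u \<phi>}"

lemma dependent_choices_subset_extend:
  fixes rk :: "'a \<Rightarrow> nat"
  assumes dep: "\<And>u \<phi> \<psi>. u \<in> W \<Longrightarrow> (\<And>v. v \<in> W \<Longrightarrow> rk v < rk u \<Longrightarrow> \<phi> v = \<psi> v) \<Longrightarrow> A u \<phi> = A u \<psi>"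
    and B: "B \<subseteq> W" and u: "u \<in> B" "\<And>v. v \<in> B \<Longrightarrow> rk v \<le> rk u"
  shows "dependent_choices A B
       \<subseteq> (\<lambda>(\<psi>, b). \<psi>(u := b)) ` Sigma (dependent_choices A (B - {u})) (A u)"
proof
  fix \<phi> assume \<phi>: "\<phi> \<in> dependent_choices A B"
  then have ext: "\<phi> \<in> extensional B" by (simp add: dependent_choices_def)
  let ?\<psi> = "restrict \<phi> (B - {u})"
  have "A w ?\<psi> = A w \<phi>" if w: "w \<in> B" for w
  proof (rule dep)
    show "w \<in> W" using w B by auto
    fix v assume "v \<in> W" "rk v < rk w"
    then have "v \<noteq> u" using u(2)[OF w] by auto
    then show "?\<psi> v = \<phi> v" using ext by (auto simp: extensional_def)
  qed
  then have "?\<psi> \<in> dependent_choices A (B - {u}) \<and> \<phi> u \<in> A u ?\<psi>"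
    using \<phi> u(1) by (auto simp: dependent_choices_def)
  moreover
  moreover have "\<phi> = ?\<psi>(u := \<phi> u)"
    using ext by (auto simp: fun_eq_iff extensional_def)
  ultimately show "\<phi> \<in> (\<lambda>(\<psi>, b). \<psi>(u := b)) ` Sigma (dependent_choices A (B - {u})) (A u)"
    by (auto intro!: image_eqI[of _ _ "(?\<psi>, \<phi> u)"])
qed

text \<open>Choosing the values in order of increasing rank, each value has at most \<open>c u\<close> options.\<close>
lemma card_dependent_choices_le:
  fixes rk :: "'a \<Rightarrow> nat"
  assumes W: "finite W"
    and dep: "\<And>u \<phi> \<psi>. u \<in> W \<Longrightarrow> (\<And>v. v \<in> W \<Longrightarrow> rk v < rk u \<Longrightarrow> \<phi> v = \<psi> v) \<Longrightarrow> A u \<phi> = A u \<psi>"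
    and fin: "\<And>u \<phi>. u \<in> W \<Longrightarrow> finite (A u \<phi>)"
    and card: "\<And>u \<phi>. u \<in> W \<Longrightarrow> card (A u \<phi>) \<le> c u"
  shows "finite (dependent_choices A W) \<and> card (dependent_choices A W) \<le> (\<Prod>u\<in>W. c u)"
  using W
proof (induction W rule: finite_remove_induct)
  case empty
  have "dependent_choices A {} = {\<lambda>_. undefined}" by (auto simp: dependent_choices_def)
  then show ?case by simp
next
  case (remove B)
  have "Max (rk ` B) \<in> rk ` B" using remove.hyps by (intro Max_in) auto
  then obtain u where "u \<in> B" "rk u = Max (rk ` B)" by (metis imageE)
  then have u: "u \<in> B" "\<And>v. v \<in> B \<Longrightarrow> rk v \<le> rk u"
    using remove.hyps by auto
  define \<Sigma> where "\<Sigma> = Sigma (dependent_choices A (B - {u})) (A u)"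
  have IH: "finite (dependent_choices A (B - {u}))" "card (dependent_choices A (B - {u})) \<le> (\<Prod>v\<in>B - {u}. c v)"
    using remove.IH[OF u(1)] by auto
  have uW: "u \<in> W" using u remove.hyps by auto
  have sub: "dependent_choices A B \<subseteq> (\<lambda>(\<psi>, b). \<psi>(u := b)) ` \<Sigma>"
    unfolding \<Sigma>_def by (rule dependent_choices_subset_extend[where rk = rk, OF dep remove.hyps(3) u])
  have fin\<Sigma>: "finite \<Sigma>" using IH(1) fin[OF uW] by (simp add: \<Sigma>_def)
  have "card (dependent_choices A B) \<le> card \<Sigma>"
    using card_mono[OF finite_imageI[OF fin\<Sigma>] sub] card_image_le[OF fin\<Sigma>, of "\<lambda>(\<psi>, b). \<psi>(u := b)"]
    by linarith
  also have "\<dots> = (\<Sum>\<psi>\<in>dependent_choices A (B - {u}). card (A u \<psi>))"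
    using IH(1) fin[OF uW] by (simp add: \<Sigma>_def card_SigmaI)
  also have "\<dots> \<le> card (dependent_choices A (B - {u})) * c u"
    using sum_mono[of _ "\<lambda>\<psi>. card (A u \<psi>)" "\<lambda>_. c u"] card[OF uW] by simp
  also have "\<dots> \<le> (\<Prod>v\<in>B. c v)"
    using IH(2) u(1) remove.hyps(1) by (simp add: prod.remove mult.commute)
  finally show ?case using sub fin\<Sigma> by (auto intro: finite_subset)
qed

lemma finite_injections:
  assumes "finite V"
  shows "finite (injections V n)"
proof (rule finite_subset)
  show "injections V n \<subseteq> PiE V (\<lambda>_. {..<n})" by (auto simp: injections_def PiE_def Pi_def)
qed (use assms in \<open>simp add: finite_PiE\<close>)

lemma card_injections_fixed_swap_le:
  fixes V :: "'v set" and g :: "'v \<Rightarrow> nat"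
  assumes V: "finite V" and a: "a \<in> V" and P: "P \<subseteq> V"
    and b: "b \<in> {..<n} - g ` P" and b': "b' \<in> {..<n} - g ` P"
  shows "card {\<sigma> \<in> injections V n. (\<forall>p\<in>P. \<sigma> p = g p) \<and> \<sigma> a = b}
       \<le> card {\<sigma> \<in> injections V n. (\<forall>p\<in>P. \<sigma> p = g p) \<and> \<sigma> a = b'}"
proof -
  let ?X = "\<lambda>b. {\<sigma> \<in> injections V n. (\<forall>p\<in>P. \<sigma> p = g p) \<and> \<sigma> a = b}"
  define \<tau> where "\<tau> = (\<lambda>\<sigma>::'v \<Rightarrow> nat. restrict (Transposition.transpose b b' \<circ> \<sigma>) V)"
  have "inj_on \<tau> (?X b)"
  proof (rule inj_onI)
    fix \<sigma>1 \<sigma>2 assume \<sigma>: "\<sigma>1 \<in> ?X b" "\<sigma>2 \<in> ?X b" "\<tau> \<sigma>1 = \<tau> \<sigma>2"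
    show "\<sigma>1 = \<sigma>2"
    proof (rule extensionalityI)
      show "\<sigma>1 \<in> extensional V" "\<sigma>2 \<in> extensional V" using \<sigma> by (auto simp: injections_def)
      fix v assume "v \<in> V"
      then have "Transposition.transpose b b' (\<sigma>1 v) = Transposition.transpose b b' (\<sigma>2 v)"
        using \<sigma>(3) unfolding \<tau>_def by (metis comp_apply restrict_apply')
      then show "\<sigma>1 v = \<sigma>2 v" by (rule Transposition.transpose_eq_imp_eq)
    qed
  qed
  moreover have "\<tau> ` ?X b \<subseteq> ?X b'"
  proof
    fix z assume "z \<in> \<tau> ` ?X b"
    then obtain \<sigma> where \<sigma>: "\<sigma> \<in> ?X b" "z = \<tau> \<sigma>" by auto
    have inj: "inj_on \<sigma> V" and range: "\<sigma> ` V \<subseteq> {..<n}" using \<sigma> by (auto simp: injections_def)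
    have "inj_on z V"
      using comp_inj_on[OF inj, of "Transposition.transpose b b'"] \<sigma>(2)
      by (simp add: \<tau>_def inj_on_subset[OF Transposition.inj_transpose])
    moreover have "z ` V \<subseteq> {..<n}"
      using range b b' \<sigma>(2) by (auto simp: \<tau>_def Transposition.transpose_def)
    ultimately have "z \<in> injections V n" using \<sigma>(2) by (simp add: \<tau>_def injections_def)
    moreover have "z p = g p" if "p \<in> P" for p
    proof -
      have "g p \<noteq> b" "g p \<noteq> b'" using b b' that by auto
      then show ?thesis using \<sigma> that P by (auto simp: \<tau>_def Transposition.transpose_def)
    qed
    moreover have "z a = b'" using \<sigma> a by (simp add: \<tau>_def)
    ultimately show "z \<in> ?X b'" by blast
  qed
  moreover have "finite (?X b')" using finite_injections[OF V] by auto
  ultimately show ?thesis by (rule card_inj_on_le)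
qed

lemma injections_fixed_eq_empty:
  assumes a: "a \<in> V" and P: "P \<subseteq> V" "a \<notin> P" and g: "g a \<notin> {..<n} - g ` P"
  shows "{\<sigma> \<in> injections V n. \<forall>p\<in>insert a P. \<sigma> p = g p} = {}"
proof (rule ccontr)
  assume "{\<sigma> \<in> injections V n. \<forall>p\<in>insert a P. \<sigma> p = g p} \<noteq> {}"
  then obtain \<sigma> where \<sigma>: "\<sigma> \<in> injections V n" "\<forall>p\<in>insert a P. \<sigma> p = g p" by auto
  have "\<sigma> a < n" using \<sigma>(1) a by (auto simp: injections_def)
  with g \<sigma>(2) obtain p where p: "p \<in> P" "\<sigma> p = \<sigma> a" by auto
  moreover have "inj_on \<sigma> V" using \<sigma>(1) by (simp add: injections_def)
  ultimately show False using P a by (auto dest: inj_onD)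
qed

lemma card_injections_fixed_insert_le:
  fixes V :: "'v set" and g :: "'v \<Rightarrow> nat"
  assumes V: "finite V" and a: "a \<in> V" and P: "P \<subseteq> V" "a \<notin> P" and n: "card V \<le> n"
  shows "real (card {\<sigma> \<in> injections V n. \<forall>p\<in>insert a P. \<sigma> p = g p}) * (real n - real (card P))
       \<le> real (card {\<sigma> \<in> injections V n. \<forall>p\<in>P. \<sigma> p = g p})"
proof -
  define X where "X = {\<sigma> \<in> injections V n. \<forall>p\<in>P. \<sigma> p = g p}"
  define Xb where "Xb = (\<lambda>b. {\<sigma> \<in> injections V n. (\<forall>p\<in>P. \<sigma> p = g p) \<and> \<sigma> a = b})"
  define free where "free = {..<n} - g ` P"
  have finP: "finite P" using P V finite_subset by auto
  have finX: "finite X" using finite_injections[OF V] by (simp add: X_def)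
  have ins: "{\<sigma> \<in> injections V n. \<forall>p\<in>insert a P. \<sigma> p = g p} = Xb (g a)"
    by (auto simp: Xb_def)
  show ?thesis
  proof (cases "g a \<in> free")
    case False
    then have "{\<sigma> \<in> injections V n. \<forall>p\<in>insert a P. \<sigma> p = g p} = {}"
      by (intro injections_fixed_eq_empty[OF a P]) (simp add: free_def)
    then show ?thesis by (simp only: card.empty)
  next
    case True
    have "card free * card (Xb (g a)) = (\<Sum>b\<in>free. card (Xb (g a)))" by simp
    also have "\<dots> \<le> (\<Sum>b\<in>free. card (Xb b))"
      using card_injections_fixed_swap_le[OF V a P(1), of "g a" n g] True
      by (intro sum_mono) (simp add: Xb_def free_def)
    also have "\<dots> = card (\<Union>b\<in>free. Xb b)"
      using finX
      by (intro card_UN_disjoint[symmetric]) (auto simp: free_def Xb_def X_def intro: finite_subset[OF _ finX])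
    also have "\<dots> \<le> card X" using finX by (intro card_mono) (auto simp: Xb_def X_def)
    finally have "card free * card (Xb (g a)) \<le> card X" .
    moreover have "real n - real (card P) \<le> real (card free)"
    proof -
      have "card {..<n} - card (g ` P) \<le> card free"
        unfolding free_def by (rule diff_card_le_card_Diff) (use finP in auto)
      moreover have "card (g ` P) \<le> card P" using finP by (rule card_image_le)
      ultimately show ?thesis by simp
    qed
    ultimately have "real (card (Xb (g a))) * (real n - real (card P)) \<le> real (card X)"
      by (smt (verit) mult_left_mono of_nat_0_le_iff of_nat_mono of_nat_mult mult.commute)
    then show ?thesis using ins by (simp add: X_def)
  qed
qed

lemma card_injections_fixed_le:
  fixes V :: "'v set" and g :: "'v \<Rightarrow> nat"
  assumes V: "finite V" and n: "card V \<le> n" and P: "P \<subseteq> V"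
  shows "real (card {\<sigma> \<in> injections V n. \<forall>p\<in>P. \<sigma> p = g p}) * (real n - real (card V)) ^ card P
       \<le> real (card (injections V n))"
  using finite_subset[OF P V] P
proof (induction P rule: finite_induct)
  case empty
  then show ?case by simp
next
  case (insert a P)
  let ?X = "\<lambda>P. real (card {\<sigma> \<in> injections V n. \<forall>p\<in>P. \<sigma> p = g p})"
  have a: "a \<in> V" and P: "P \<subseteq> V" using insert by auto
  have gap: "0 \<le> real n - real (card V)" "real n - real (card V) \<le> real n - real (card P)"
    using n card_mono[OF V P] by auto
  have "?X (insert a P) * (real n - real (card V)) ^ card (insert a P)
      = ?X (insert a P) * (real n - real (card V)) * (real n - real (card V)) ^ card P"
    using insert by (simp add: mult.assoc)
  also have "\<dots> \<le> ?X (insert a P) * (real n - real (card P)) * (real n - real (card V)) ^ card P"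
    using gap by (intro mult_right_mono mult_left_mono) auto
  also have "\<dots> \<le> ?X P * (real n - real (card V)) ^ card P"
    using card_injections_fixed_insert_le[OF V a P insert(2) n, of g] gap by (intro mult_right_mono) auto
  also have "\<dots> \<le> real (card (injections V n))" using insert.IH P by simp
  finally show ?case .
qed

lemma tree_edgeE:
  assumes "e \<in> tree_edges D h"
  obtains w c where "e = {w, w @ [c]}" "w \<in> tree_verts D h" "w @ [c] \<in> tree_verts D h" "c < D"
  using assms by (auto simp: tree_edges_def tree_verts_def)

lemma tree_edge_subset: "e \<in> tree_edges D h \<Longrightarrow> e \<subseteq> tree_verts D h"
  by (erule tree_edgeE) auto

lemma finite_tree_edges: "finite (tree_edges D h)"
  by (rule finite_subset[of _ "Pow (tree_verts D h)"]) (auto dest: tree_edge_subset simp: finite_tree_verts)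

lemma Union_tree_edges_subset: "F \<subseteq> tree_edges D h \<Longrightarrow> \<Union>F \<subseteq> tree_verts D h"
  using tree_edge_subset by blast

lemma finite_Union_tree_edges: "F \<subseteq> tree_edges D h \<Longrightarrow> finite (\<Union>F)"
  using finite_tree_verts Union_tree_edges_subset by (rule finite_subset[rotated])

definition tree_nbrs :: "nat \<Rightarrow> nat \<Rightarrow> nat list \<Rightarrow> nat list set" where
  "tree_nbrs D h v = {w. {v, w} \<in> tree_edges D h}"

lemma tree_nbrs_subset: "tree_nbrs D h v \<subseteq> insert (butlast v) ((\<lambda>c. v @ [c]) ` {..<D})"
proof
  fix w assume "w \<in> tree_nbrs D h v"
  then have "{v, w} \<in> tree_edges D h" by (simp add: tree_nbrs_def)
  then obtain x c where "{v, w} = {x, x @ [c]}" "c < D" by (rule tree_edgeE)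
  then have "(v = x \<and> w = x @ [c]) \<or> (v = x @ [c] \<and> w = x)" "c < D" by (auto simp: doubleton_eq_iff)
  then show "w \<in> insert (butlast v) ((\<lambda>c. v @ [c]) ` {..<D})" by auto
qed

lemma finite_tree_nbrs: "finite (tree_nbrs D h v)"
  by (rule finite_subset[OF tree_nbrs_subset]) auto

lemma card_tree_nbrs_le: "card (tree_nbrs D h v) \<le> D + 1"
proof -
  have "card (tree_nbrs D h v) \<le> card (insert (butlast v) ((\<lambda>c. v @ [c]) ` {..<D}))"
    by (rule card_mono[OF _ tree_nbrs_subset]) auto
  also have "\<dots> \<le> Suc (card ((\<lambda>c. v @ [c]) ` {..<D}))" by (rule card_insert_le_m1) auto
  also have "card ((\<lambda>c. v @ [c]) ` {..<D}) \<le> D" using card_image_le[of "{..<D}" "\<lambda>c. v @ [c]"] by simp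
  finally show ?thesis by simp
qed

text \<open>Every edge \<open>{w, w @ [c]}\<close> is determined by its endpoint \<open>w @ [c]\<close> away from the root.\<close>
definition child_ends :: "nat list set set \<Rightarrow> nat list set" where
  "child_ends F = {u \<in> \<Union>F. u \<noteq> [] \<and> {butlast u, u} \<in> F}"

lemma child_ends_subset: "child_ends F \<subseteq> \<Union>F"
  by (auto simp: child_ends_def)

lemma bij_betw_child_ends:
  assumes "F \<subseteq> tree_edges D h"
  shows "bij_betw (\<lambda>u. {butlast u, u}) (child_ends F) F"
proof (rule bij_betwI')
  fix u u' assume u: "u \<in> child_ends F" "u' \<in> child_ends F"
  then have "u \<noteq> []" "u' \<noteq> []" by (auto simp: child_ends_def)
  then have len: "length (butlast u) < length u" "length (butlast u') < length u'" by auto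
  show "({butlast u, u} = {butlast u', u'}) = (u = u')"
  proof
    assume "{butlast u, u} = {butlast u', u'}"
    moreover have "\<not> (u' = butlast u \<and> u = butlast u')"
    proof
      assume "u' = butlast u \<and> u = butlast u'"
      then have a: "u' = butlast u" and b: "u = butlast u'" by blast+
      from len(1) have "length u' < length u" by (subst a)
      moreover from len(2) have "length u < length u'" by (subst b)
      ultimately show False by simp
    qed
    ultimately show "u = u'" by (metis doubleton_eq_iff)
  qed simp
next
  fix u assume "u \<in> child_ends F"
  then show "{butlast u, u} \<in> F" by (simp add: child_ends_def)
next
  fix e assume e: "e \<in> F"
  then have "e \<in> tree_edges D h" using assms by auto
  then obtain w c where wc: "e = {w, w @ [c]}" by (auto elim!: tree_edgeE)
  then have "w @ [c] \<in> child_ends F" using e by (auto simp: child_ends_def)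
  moreover have "e = {butlast (w @ [c]), w @ [c]}" using wc by simp
  ultimately show "\<exists>u\<in>child_ends F. e = {butlast u, u}" by blast
qed

lemma card_child_ends: "F \<subseteq> tree_edges D h \<Longrightarrow> card (child_ends F) = card F"
  by (rule bij_betw_same_card[OF bij_betw_child_ends])

lemma card_tree_edges_le: "card (tree_edges D h) \<le> card (tree_verts D h)"
proof -
  have "card (tree_edges D h) = card (child_ends (tree_edges D h))"
    using card_child_ends[of "tree_edges D h" D h] by simp
  also have "\<dots> \<le> card (tree_verts D h)"
    using child_ends_subset Union_tree_edges_subset[of "tree_edges D h" D h] finite_tree_verts
    by (intro card_mono) auto
  finally show ?thesis .
qed

lemma card_lt_card_Union_tree_edges:
  assumes F: "F \<subseteq> tree_edges D h" "F \<noteq> {}"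
  shows "card F < card (\<Union>F)"
proof -
  obtain e where e: "e \<in> F" using F(2) by auto
  then have "e \<in> tree_edges D h" using F(1) by auto
  then obtain w c where "e = {w, w @ [c]}" by (auto elim!: tree_edgeE)
  then have "w \<in> \<Union>F" using e by auto
  then obtain u where u: "u \<in> \<Union>F" "\<And>v. v \<in> \<Union>F \<Longrightarrow> length u \<le> length v"
    using ex_has_least_nat[of "\<lambda>v. v \<in> \<Union>F" w length] by blast
  have "u \<notin> child_ends F"
  proof
    assume "u \<in> child_ends F"
    then have "butlast u \<in> \<Union>F" "u \<noteq> []" by (auto simp: child_ends_def)
    then show False using u(2)[of "butlast u"] by (cases u rule: rev_cases) auto
  qed
  then have "child_ends F \<subset> \<Union>F" using u(1) child_ends_subset by blast
  then have "card (child_ends F) < card (\<Union>F)"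
    using finite_Union_tree_edges[OF F(1)] by (rule psubset_card_mono[rotated])
  then show ?thesis using card_child_ends[OF F(1)] by simp
qed

definition tree_embeddings :: "nat \<Rightarrow> nat \<Rightarrow> nat list set set \<Rightarrow> (nat list \<Rightarrow> nat list) set" where
  "tree_embeddings D h F = {\<phi> \<in> extensional (\<Union>F). \<phi> ` \<Union>F \<subseteq> tree_verts D h \<and> inj_on \<phi> (\<Union>F)
      \<and> (\<forall>e\<in>F. \<phi> ` e \<in> tree_edges D h)}"

text \<open>Going down the tree, a child end must be mapped to a neighbour of the image of its parent.\<close>
lemma card_tree_embeddings_le:
  assumes F: "F \<subseteq> tree_edges D h"
  shows "finite (tree_embeddings D h F)"
    and "card (tree_embeddings D h F)
       \<le> card (tree_verts D h) ^ (card (\<Union>F) - card F) * (D + 1) ^ card F"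
proof -
  define W where "W = \<Union>F"
  define R where "R = child_ends F"
  define K where "K = card (tree_verts D h)"
  define A where "A = (\<lambda>u (\<phi>::nat list \<Rightarrow> nat list).
    if u \<in> R then tree_nbrs D h (\<phi> (butlast u)) else tree_verts D h)"
  have W: "finite W" using finite_Union_tree_edges[OF F] by (simp add: W_def)
  have RW: "R \<subseteq> W" using child_ends_subset by (simp add: R_def W_def)
  have choices: "finite (dependent_choices A W)
      \<and> card (dependent_choices A W) \<le> (\<Prod>u\<in>W. if u \<in> R then D + 1 else K)"
  proof (rule card_dependent_choices_le[OF W, where rk = length])
    fix u and \<phi> \<psi> :: "nat list \<Rightarrow> nat list"
    assume "u \<in> W" and eq: "\<And>v. v \<in> W \<Longrightarrow> length v < length u \<Longrightarrow> \<phi> v = \<psi> v"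
    show "A u \<phi> = A u \<psi>"
    proof (cases "u \<in> R")
      case True
      then have "butlast u \<in> W" "u \<noteq> []" by (auto simp: R_def child_ends_def W_def)
      then show ?thesis using eq by (simp add: A_def)
    qed (simp add: A_def)
  qed (use card_tree_nbrs_le[of D h] in \<open>auto simp: A_def K_def finite_tree_nbrs finite_tree_verts\<close>)
  have "tree_embeddings D h F \<subseteq> dependent_choices A W"
  proof
    fix \<phi> assume \<phi>: "\<phi> \<in> tree_embeddings D h F"
    have "\<phi> u \<in> A u \<phi>" if u: "u \<in> W" for u
    proof (cases "u \<in> R")
      case True
      then have "{butlast u, u} \<in> F" by (simp add: R_def child_ends_def)
      then have "\<phi> ` {butlast u, u} \<in> tree_edges D h" using \<phi> unfolding tree_embeddings_def by blast
      then show ?thesis using True by (simp add: A_def tree_nbrs_def)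
    next
      case False
      then show ?thesis using \<phi> u by (auto simp: A_def tree_embeddings_def W_def)
    qed
    then show "\<phi> \<in> dependent_choices A W"
      using \<phi> unfolding dependent_choices_def tree_embeddings_def W_def by blast
  qed
  moreover have "(\<Prod>u\<in>W. if u \<in> R then D + 1 else K) = K ^ (card W - card F) * (D + 1) ^ card F"
  proof -
    have "card R = card F" "card (W - R) = card W - card F"
      using card_child_ends[OF F] card_Diff_subset[OF finite_subset[OF RW W] RW] by (simp_all add: R_def)
    then show ?thesis using W RW by (simp add: prod.If_cases Int_absorb1 Diff_eq[symmetric] mult.commute)
  qed
  ultimately show "finite (tree_embeddings D h F)"
    and "card (tree_embeddings D h F) \<le> K ^ (card (\<Union>F) - card F) * (D + 1) ^ card F"
    using choices by (auto simp: W_def intro: finite_subset card_mono[THEN order_trans])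
qed

definition planted_edges :: "nat \<Rightarrow> nat \<Rightarrow> (nat list \<Rightarrow> nat) \<Rightarrow> nat set set" where
  "planted_edges D h \<sigma> = (\<lambda>e. \<sigma> ` e) ` tree_edges D h"

lemma P1_eq_planted_mixture:
  "P1 lam D h n = bind_pmf (erdos_renyi n (lam / real n))
     (\<lambda>G0. map_pmf (\<lambda>\<sigma>. G0 \<union> planted_edges D h \<sigma>) (pmf_of_set (injections (tree_verts D h) n)))"
  by (simp add: P1_def planted_edges_def)

lemma injections_nonempty:
  assumes "finite V" "card V \<le> n"
  shows "injections V n \<noteq> {}"
proof -
  obtain f where "bij_betw f V {0..<card V}" using ex_bij_betw_finite_nat[OF assms(1)] by blast
  then have "restrict f V \<in> injections V n"
    using assms(2) by (auto simp: injections_def bij_betw_def inj_on_def)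
  then show ?thesis by blast
qed

lemma planted_edges_subset_pairs:
  assumes "\<sigma> \<in> injections (tree_verts D h) n"
  shows "planted_edges D h \<sigma> \<subseteq> pairs n"
proof
  fix z assume "z \<in> planted_edges D h \<sigma>"
  then obtain e where e: "e \<in> tree_edges D h" "z = \<sigma> ` e" by (auto simp: planted_edges_def)
  obtain w c where wc: "e = {w, w @ [c]}" "w \<in> tree_verts D h" "w @ [c] \<in> tree_verts D h"
    using e(1) by (rule tree_edgeE) blast
  have "inj_on \<sigma> (tree_verts D h)" "\<sigma> ` tree_verts D h \<subseteq> {..<n}"
    using assms by (auto simp: injections_def)
  then have ne: "\<sigma> w \<noteq> \<sigma> (w @ [c])" and lt: "\<sigma> w < n" "\<sigma> (w @ [c]) < n"
    using wc by (auto dest: inj_onD)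
  have z: "z = {\<sigma> w, \<sigma> (w @ [c])}" using e wc by auto
  show "z \<in> pairs n"
  proof (cases "\<sigma> w < \<sigma> (w @ [c])")
    case True
    then show ?thesis using z lt unfolding pairs_def by blast
  next
    case False
    then have "\<sigma> (w @ [c]) < \<sigma> w" using ne by simp
    then show ?thesis using z lt unfolding pairs_def by (auto simp: insert_commute)
  qed
qed

lemma inj_on_image_tree_edges:
  assumes "inj_on \<sigma> (tree_verts D h)"
  shows "inj_on (\<lambda>e. \<sigma> ` e) (tree_edges D h)"
proof (rule inj_onI)
  fix e1 e2 assume e: "e1 \<in> tree_edges D h" "e2 \<in> tree_edges D h" "\<sigma> ` e1 = \<sigma> ` e2"
  then show "e1 = e2"
    using inj_on_image_eq_iff[OF assms tree_edge_subset[OF e(1)] tree_edge_subset[OF e(2)]] by simp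
qed

lemma card_planted_edges_le: "card (planted_edges D h \<sigma>) \<le> card (tree_verts D h)"
  using card_image_le[OF finite_tree_edges, of "\<lambda>e. \<sigma> ` e" D h] card_tree_edges_le[of D h]
  by (simp add: planted_edges_def)

lemma finite_planted_edges: "finite (planted_edges D h \<sigma>)"
  by (simp add: planted_edges_def finite_tree_edges)

lemma covering_injection_embedding:
  assumes \<sigma>: "inj_on \<sigma> (tree_verts D h)" and \<sigma>': "\<sigma>' \<in> injections (tree_verts D h) n"
    and F: "F \<subseteq> tree_edges D h" and cover: "(\<lambda>e. \<sigma> ` e) ` F \<subseteq> planted_edges D h \<sigma>'"
  obtains \<phi> where "\<phi> \<in> tree_embeddings D h F" "\<And>u. u \<in> \<Union>F \<Longrightarrow> \<sigma>' (\<phi> u) = \<sigma> u"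
proof -
  let ?V = "tree_verts D h"
  have \<sigma>'_inj: "inj_on \<sigma>' ?V" using \<sigma>' by (simp add: injections_def)
  have match: "\<exists>e'\<in>tree_edges D h. \<sigma> ` e = \<sigma>' ` e'" if e: "e \<in> F" for e
  proof -
    have "\<sigma> ` e \<in> planted_edges D h \<sigma>'" using cover e by (rule subsetD[OF _ imageI])
    then show ?thesis by (auto simp: planted_edges_def)
  qed
  have range: "\<sigma> u \<in> \<sigma>' ` ?V" if u: "u \<in> \<Union>F" for u
  proof -
    obtain e where "e \<in> F" "u \<in> e" using u by blast
    moreover obtain e' where "e' \<in> tree_edges D h" "\<sigma> ` e = \<sigma>' ` e'" using match[OF \<open>e \<in> F\<close>] by blast
    ultimately have "\<sigma> u \<in> \<sigma>' ` e'" "e' \<subseteq> ?V" by (auto simp: tree_edge_subset)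
    then show ?thesis by blast
  qed
  define \<phi> where "\<phi> = restrict (\<lambda>u. inv_into ?V \<sigma>' (\<sigma> u)) (\<Union>F)"
  have \<phi>: "\<sigma>' (\<phi> u) = \<sigma> u" if "u \<in> \<Union>F" for u
    using range[OF that] that by (simp add: \<phi>_def f_inv_into_f)
  have "\<phi> ` \<Union>F \<subseteq> ?V" using range by (auto simp: \<phi>_def intro!: inv_into_into)
  moreover have "inj_on \<phi> (\<Union>F)"
  proof (rule inj_onI)
    fix u1 u2 assume u: "u1 \<in> \<Union>F" "u2 \<in> \<Union>F" "\<phi> u1 = \<phi> u2"
    then have "\<sigma> u1 = \<sigma> u2" using \<phi>[of u1] \<phi>[of u2] by simp
    then show "u1 = u2" using \<sigma> Union_tree_edges_subset[OF F] u by (auto dest: inj_onD)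
  qed
  moreover have "\<phi> ` e \<in> tree_edges D h" if e: "e \<in> F" for e
  proof -
    obtain e' where e': "e' \<in> tree_edges D h" "\<sigma> ` e = \<sigma>' ` e'" using match[OF e] by blast
    have "\<phi> ` e = (\<lambda>u. inv_into ?V \<sigma>' (\<sigma> u)) ` e" using e by (intro image_cong) (auto simp: \<phi>_def)
    also have "\<dots> = inv_into ?V \<sigma>' ` \<sigma> ` e" by (simp add: image_image)
    also have "\<dots> = e'"
      using e' \<sigma>'_inj tree_edge_subset by (simp add: inv_into_image_cancel)
    finally show ?thesis using e' by simp
  qed
  moreover have "\<phi> \<in> extensional (\<Union>F)" by (simp add: \<phi>_def)
  ultimately have "\<phi> \<in> tree_embeddings D h F" unfolding tree_embeddings_def by blast
  then show thesis using that \<phi> by blast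
qed

lemma card_covering_injections_le:
  assumes \<sigma>: "\<sigma> \<in> injections (tree_verts D h) n" and F: "F \<subseteq> tree_edges D h"
    and n: "card (tree_verts D h) \<le> n"
  shows "real (card {\<sigma>' \<in> injections (tree_verts D h) n. (\<lambda>e. \<sigma> ` e) ` F \<subseteq> planted_edges D h \<sigma>'})
          * (real n - real (card (tree_verts D h))) ^ card (\<Union>F)
       \<le> real (card (tree_embeddings D h F)) * real (card (injections (tree_verts D h) n))"
proof -
  define V where "V = tree_verts D h"
  define I where "I = injections V n"
  define W where "W = \<Union>F"
  define \<Phi> where "\<Phi> = tree_embeddings D h F"
  define Y where "Y = (\<lambda>\<phi>. {\<sigma>' \<in> I. \<forall>u\<in>W. \<sigma>' (\<phi> u) = \<sigma> u})"
  define c where "c = real n - real (card V)"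
  have c: "0 \<le> c" using n by (simp add: c_def V_def)
  have finI: "finite I" by (simp add: I_def V_def finite_injections finite_tree_verts)
  have fin\<Phi>: "finite \<Phi>" unfolding \<Phi>_def using F by (rule card_tree_embeddings_le(1))
  have inj\<sigma>: "inj_on \<sigma> V" using \<sigma> by (simp add: injections_def V_def)
  have cover: "{\<sigma>' \<in> I. (\<lambda>e. \<sigma> ` e) ` F \<subseteq> planted_edges D h \<sigma>'} \<subseteq> (\<Union>\<phi>\<in>\<Phi>. Y \<phi>)"
  proof
    fix \<sigma>' assume "\<sigma>' \<in> {\<sigma>' \<in> I. (\<lambda>e. \<sigma> ` e) ` F \<subseteq> planted_edges D h \<sigma>'}"
    then have \<sigma>': "\<sigma>' \<in> injections (tree_verts D h) n" "(\<lambda>e. \<sigma> ` e) ` F \<subseteq> planted_edges D h \<sigma>'"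
      by (auto simp: I_def V_def)
    obtain \<phi> where "\<phi> \<in> \<Phi>" "\<And>u. u \<in> W \<Longrightarrow> \<sigma>' (\<phi> u) = \<sigma> u"
      using covering_injection_embedding[OF inj\<sigma>[unfolded V_def] \<sigma>'(1) F \<sigma>'(2)]
      unfolding \<Phi>_def W_def by blast
    then show "\<sigma>' \<in> (\<Union>\<phi>\<in>\<Phi>. Y \<phi>)" using \<sigma>' by (auto simp: Y_def I_def V_def)
  qed
  have Y: "real (card (Y \<phi>)) * c ^ card W \<le> real (card I)" if "\<phi> \<in> \<Phi>" for \<phi>
  proof -
    have inj\<phi>: "inj_on \<phi> W" and \<phi>W: "\<phi> ` W \<subseteq> V"
      using that by (auto simp: \<Phi>_def tree_embeddings_def W_def V_def)
    have "Y \<phi> = {\<sigma>' \<in> I. \<forall>p\<in>\<phi> ` W. \<sigma>' p = \<sigma> (the_inv_into W \<phi> p)}"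
      using inj\<phi> by (auto simp: Y_def the_inv_into_f_f)
    moreover have "card (\<phi> ` W) = card W" using inj\<phi> by (rule card_image)
    ultimately show ?thesis
      using card_injections_fixed_le[OF _ _ \<phi>W, of n "\<lambda>p. \<sigma> (the_inv_into W \<phi> p)"] n
      by (simp add: I_def c_def V_def finite_tree_verts)
  qed
  have "card {\<sigma>' \<in> I. (\<lambda>e. \<sigma> ` e) ` F \<subseteq> planted_edges D h \<sigma>'} \<le> card (\<Union>\<phi>\<in>\<Phi>. Y \<phi>)"
    using cover fin\<Phi> finI by (intro card_mono) (auto simp: Y_def)
  also have "\<dots> \<le> (\<Sum>\<phi>\<in>\<Phi>. card (Y \<phi>))" using fin\<Phi> by (rule card_UN_le)
  finally have "real (card {\<sigma>' \<in> I. (\<lambda>e. \<sigma> ` e) ` F \<subseteq> planted_edges D h \<sigma>'}) * c ^ card W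
      \<le> (\<Sum>\<phi>\<in>\<Phi>. real (card (Y \<phi>))) * c ^ card W"
    using c by (intro mult_right_mono) (simp_all flip: of_nat_sum)
  also have "\<dots> \<le> (\<Sum>\<phi>\<in>\<Phi>. real (card I))"
    unfolding sum_distrib_right using Y by (rule sum_mono)
  finally show ?thesis by (simp add: I_def V_def W_def c_def \<Phi>_def)
qed

lemma sum_power_card_Int_eq:
  fixes x :: real
  assumes I: "finite I" and S: "finite S"
  shows "(\<Sum>\<sigma>\<in>I. x ^ card (S \<inter> T \<sigma>))
       = (\<Sum>F\<in>Pow S. (x - 1) ^ card F * real (card {\<sigma> \<in> I. F \<subseteq> T \<sigma>}))"
proof -
  have binomial: "x ^ card A = (\<Sum>F\<in>Pow A. (x - 1) ^ card F)" if "finite A" for A :: "'b set"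
    using prod_add[OF that, of "\<lambda>_. x - 1" "\<lambda>_. 1"] by simp
  have "(\<Sum>\<sigma>\<in>I. x ^ card (S \<inter> T \<sigma>)) = (\<Sum>\<sigma>\<in>I. \<Sum>F\<in>Pow S. if F \<subseteq> T \<sigma> then (x - 1) ^ card F else 0)"
  proof (rule sum.cong[OF refl])
    fix \<sigma>
    have "x ^ card (S \<inter> T \<sigma>) = (\<Sum>F\<in>Pow (S \<inter> T \<sigma>). (x - 1) ^ card F)"
      using S by (simp add: binomial)
    also have "Pow (S \<inter> T \<sigma>) = {F \<in> Pow S. F \<subseteq> T \<sigma>}" by auto
    also have "(\<Sum>F\<in>\<dots>. (x - 1) ^ card F) = (\<Sum>F\<in>Pow S. if F \<subseteq> T \<sigma> then (x - 1) ^ card F else 0)"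
      by (rule sum.inter_filter) (simp add: S)
    finally show "x ^ card (S \<inter> T \<sigma>) = (\<Sum>F\<in>Pow S. if F \<subseteq> T \<sigma> then (x - 1) ^ card F else 0)" .
  qed
  also have "\<dots> = (\<Sum>F\<in>Pow S. \<Sum>\<sigma>\<in>I. if F \<subseteq> T \<sigma> then (x - 1) ^ card F else 0)"
    by (rule sum.swap)
  also have "\<dots> = (\<Sum>F\<in>Pow S. (x - 1) ^ card F * real (card {\<sigma> \<in> I. F \<subseteq> T \<sigma>}))"
    using I by (simp add: sum.inter_filter[symmetric] mult.commute)
  finally show ?thesis .
qed

text \<open>An injection \<open>\<sigma>'\<close> whose planted edges contain \<open>F\<close> satisfies \<open>\<sigma>' \<circ> \<phi> = \<sigma>\<close> on the vertices of
  the forest \<open>F0 = {e. \<sigma> ` e \<in> F}\<close> for a tree embedding \<open>\<phi>\<close> of \<open>F0\<close>; the surplus \<open>j\<close> of vertices over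
  edges of \<open>F0\<close> yields the factor \<open>K / n\<close> in the second moment.\<close>
lemma card_injections_containing_le:
  fixes \<sigma> :: "nat list \<Rightarrow> nat" and D h n :: nat
  defines "K \<equiv> card (tree_verts D h)" and "I \<equiv> injections (tree_verts D h) n"
  assumes \<sigma>: "\<sigma> \<in> I" and F: "F \<subseteq> planted_edges D h \<sigma>" "F \<noteq> {}" and n: "K \<le> n"
  obtains j where "1 \<le> j"
    and "real (card {\<sigma>' \<in> I. F \<subseteq> planted_edges D h \<sigma>'}) * (real n - real K) ^ (j + card F)
         \<le> real K ^ j * (real D + 1) ^ card F * real (card I)"
proof -
  define F0 where "F0 = {e \<in> tree_edges D h. \<sigma> ` e \<in> F}"
  have F0: "F0 \<subseteq> tree_edges D h" by (auto simp: F0_def)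
  have img: "(\<lambda>e. \<sigma> ` e) ` F0 = F" using F(1) by (auto simp: F0_def planted_edges_def)
  have "inj_on (\<lambda>e. \<sigma> ` e) F0"
    using inj_on_image_tree_edges[of \<sigma> D h] \<sigma> F0 by (auto simp: I_def injections_def intro: inj_on_subset)
  then have "card ((\<lambda>e. \<sigma> ` e) ` F0) = card F0" by (rule card_image)
  then have card_F0: "card F0 = card F" using img by simp
  define j where "j = card (\<Union>F0) - card F"
  have "F0 \<noteq> {}" using img F(2) by auto
  then have "card F < card (\<Union>F0)" using card_lt_card_Union_tree_edges[OF F0] card_F0 by simp
  then have j: "1 \<le> j" "card (\<Union>F0) = j + card F" by (auto simp: j_def)
  show thesis
  proof (rule that[OF j(1)])
    have "real (card {\<sigma>' \<in> I. F \<subseteq> planted_edges D h \<sigma>'}) * (real n - real K) ^ (j + card F)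
        \<le> real (card (tree_embeddings D h F0)) * real (card I)"
      using card_covering_injections_le[OF \<sigma>[unfolded I_def] F0 n[unfolded K_def]]
      by (simp add: img j(2) I_def K_def)
    also have "\<dots> \<le> real K ^ j * (real D + 1) ^ card F * real (card I)"
    proof (rule mult_right_mono)
      have "card (tree_embeddings D h F0) \<le> K ^ j * (D + 1) ^ card F"
        using card_tree_embeddings_le(2)[OF F0] card_F0 by (simp add: K_def j_def)
      then have "real (card (tree_embeddings D h F0)) \<le> real (K ^ j * (D + 1) ^ card F)"
        by (simp only: of_nat_le_iff)
      then show "real (card (tree_embeddings D h F0)) \<le> real K ^ j * (real D + 1) ^ card F"
        by (simp add: add.commute)
    qed simp
    finally show "real (card {\<sigma>' \<in> I. F \<subseteq> planted_edges D h \<sigma>'}) * (real n - real K) ^ (j + card F)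
        \<le> real K ^ j * (real D + 1) ^ card F * real (card I)" .
  qed
qed

lemma overlap_term_le:
  fixes \<sigma> :: "nat list \<Rightarrow> nat" and D h n :: nat and lam :: real
  defines "K \<equiv> card (tree_verts D h)" and "I \<equiv> injections (tree_verts D h) n"
    and "B \<equiv> max 1 (2 * (real D + 1) / lam)"
  assumes \<sigma>: "\<sigma> \<in> I" and lam: "0 < lam" "lam \<le> real n" and n: "2 * K \<le> n"
    and F: "F \<subseteq> planted_edges D h \<sigma>" "F \<noteq> {}"
  shows "(real n / lam - 1) ^ card F * real (card {\<sigma>' \<in> I. F \<subseteq> planted_edges D h \<sigma>'})
       \<le> real (card I) * (2 * real K / real n * B ^ K)"
proof -
  define y where "y = real n / lam - 1"
  define c where "c = real n - real K"
  define N where "N = real (card {\<sigma>' \<in> I. F \<subseteq> planted_edges D h \<sigma>'})"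
  let ?m = "card F"
  have "card (tree_verts D h) \<le> n" using n by (simp add: K_def)
  then obtain j where j: "1 \<le> j"
    and count: "N * c ^ (j + ?m) \<le> real K ^ j * (real D + 1) ^ ?m * real (card I)"
    using card_injections_containing_le[OF \<sigma>[unfolded I_def] F] unfolding N_def c_def K_def I_def by blast
  have y: "0 \<le> y" using lam by (simp add: y_def)
  have c: "real n / 2 \<le> c" "0 < c" using n lam by (auto simp: c_def)
  have "real K \<le> c" using n by (simp add: c_def)
  then have Kc1: "real K / c \<le> 1" using c by (simp add: divide_le_eq)
  have "real K / c \<le> real K / (real n / 2)" using c lam by (intro frac_le) auto
  also have "\<dots> = 2 * real K / real n" by simp
  finally have Kc2: "real K / c \<le> 2 * real K / real n" .
  have yc: "(real D + 1) * y / c \<le> B"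
  proof -
    have "(real D + 1) * y / c \<le> (real D + 1) * (real n / lam) / (real n / 2)"
      using c y lam by (intro frac_le mult_left_mono) (auto simp: y_def)
    also have "\<dots> = 2 * (real D + 1) / lam" using c lam by (simp add: field_simps)
    finally show ?thesis by (simp add: B_def)
  qed
  have "?m \<le> K"
    using card_mono[OF finite_planted_edges F(1)] card_planted_edges_le[of D h \<sigma>] by (simp add: K_def)
  have B: "1 \<le> B" "0 \<le> real K / c" using c by (auto simp: B_def)
  have "N \<le> real K ^ j * (real D + 1) ^ ?m * real (card I) / c ^ (j + ?m)"
    using count c by (simp add: pos_le_divide_eq)
  then have "y ^ ?m * N \<le> y ^ ?m * (real K ^ j * (real D + 1) ^ ?m * real (card I) / c ^ (j + ?m))"
    using y by (intro mult_left_mono) auto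
  also have "\<dots> = real (card I) * ((real K / c) ^ j * ((real D + 1) * y / c) ^ ?m)"
    by (simp add: power_add power_divide power_mult_distrib ac_simps)
  also have "\<dots> \<le> real (card I) * ((real K / c) * B ^ ?m)"
  proof (intro mult_left_mono mult_mono)
    show "(real K / c) ^ j \<le> real K / c" using power_decreasing[OF j, of "real K / c"] Kc1 B by simp
    show "((real D + 1) * y / c) ^ ?m \<le> B ^ ?m" using yc y c by (intro power_mono) auto
  qed (use B y c in auto)
  also have "\<dots> \<le> real (card I) * (2 * real K / real n * B ^ K)"
    using Kc2 B \<open>?m \<le> K\<close> by (intro mult_left_mono mult_mono power_increasing) auto
  finally show ?thesis by (simp add: y_def N_def)
qed

lemma sum_overlap_power_le:
  fixes \<sigma> :: "nat list \<Rightarrow> nat" and D h n :: nat and lam :: real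
  defines "K \<equiv> card (tree_verts D h)" and "I \<equiv> injections (tree_verts D h) n"
    and "B \<equiv> max 1 (2 * (real D + 1) / lam)"
  assumes \<sigma>: "\<sigma> \<in> I" and lam: "0 < lam" "lam \<le> real n" and n: "2 * K \<le> n"
  shows "(\<Sum>\<sigma>'\<in>I. (real n / lam) ^ card (planted_edges D h \<sigma> \<inter> planted_edges D h \<sigma>'))
       \<le> real (card I) * (1 + 2 * (real K * (2 * B) ^ K / real n))"
proof -
  let ?S = "planted_edges D h"
  let ?N = "\<lambda>F. real (card {\<sigma>' \<in> I. F \<subseteq> ?S \<sigma>'})"
  define t where "t = real (card I) * (2 * real K / real n * B ^ K)"
  have t: "0 \<le> t" by (simp add: t_def B_def)
  have "(\<Sum>\<sigma>'\<in>I. (real n / lam) ^ card (?S \<sigma> \<inter> ?S \<sigma>'))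
      = (\<Sum>F\<in>Pow (?S \<sigma>). (real n / lam - 1) ^ card F * ?N F)"
    by (rule sum_power_card_Int_eq) (simp_all add: I_def finite_injections finite_tree_verts finite_planted_edges)
  also have "\<dots> = ?N {} + (\<Sum>F\<in>Pow (?S \<sigma>) - {{}}. (real n / lam - 1) ^ card F * ?N F)"
    by (subst sum.remove[of _ "{}"]) (auto simp: finite_planted_edges)
  also have "\<dots> \<le> real (card I) + (\<Sum>F\<in>Pow (?S \<sigma>) - {{}}. t)"
    using overlap_term_le[OF \<sigma>[unfolded I_def] lam n[unfolded K_def]]
    by (intro add_mono sum_mono) (auto simp: t_def K_def I_def B_def)
  also have "\<dots> \<le> real (card I) + 2 ^ K * t"
  proof -
    have "card (Pow (?S \<sigma>) - {{}}) \<le> card (Pow (?S \<sigma>))"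
      by (intro card_mono) (auto simp: finite_planted_edges)
    also have "\<dots> \<le> 2 ^ K"
      using card_planted_edges_le[of D h \<sigma>] by (simp add: card_Pow finite_planted_edges K_def power_increasing)
    finally have "real (card (Pow (?S \<sigma>) - {{}})) \<le> real ((2::nat) ^ K)"
      by (simp only: of_nat_le_iff)
    then show ?thesis using t by (simp add: mult_right_mono)
  qed
  also have "2 ^ K * t = real (card I) * (2 * (real K * (2 * B) ^ K / real n))"
    by (simp add: t_def power_mult_distrib mult_ac)
  also have "real (card I) + \<dots> = real (card I) * (1 + 2 * (real K * (2 * B) ^ K / real n))"
    by (simp add: distrib_left)
  finally show ?thesis .
qed

lemma prob_P1_P0_diff_le:
  fixes lam :: real and D h n :: nat
  defines "K \<equiv> card (tree_verts D h)" and "B \<equiv> max 1 (2 * (real D + 1) / lam)"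
  assumes lam: "0 < lam" "lam \<le> real n" and n: "2 * K \<le> n"
  shows "\<bar>measure_pmf.prob (P1 lam D h n) A - measure_pmf.prob (P0 lam n) A\<bar>
     \<le> sqrt (2 * (real K * (2 * B) ^ K / real n))"
proof -
  define I where "I = injections (tree_verts D h) n"
  define q where "q = lam / real n"
  define \<epsilon> where "\<epsilon> = 2 * (real K * (2 * B) ^ K / real n)"
  have q: "0 < q" "q \<le> 1" using lam by (auto simp: q_def)
  have "card (tree_verts D h) \<le> n" using n by (simp add: K_def)
  then have I: "finite I" "I \<noteq> {}"
    by (simp_all add: I_def finite_injections finite_tree_verts injections_nonempty)
  have "(\<Sum>\<sigma>\<in>I. \<Sum>\<sigma>'\<in>I. (1 / q) ^ card (planted_edges D h \<sigma> \<inter> planted_edges D h \<sigma>'))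
      \<le> (\<Sum>\<sigma>\<in>I. real (card I) * (1 + \<epsilon>))"
    using sum_overlap_power_le[OF _ lam n[unfolded K_def]]
    by (intro sum_mono) (simp add: q_def I_def \<epsilon>_def K_def B_def)
  also have "\<dots> = (real (card I))\<^sup>2 * (1 + \<epsilon>)" by (simp add: power2_eq_square)
  finally have "(\<Sum>\<sigma>\<in>I. \<Sum>\<sigma>'\<in>I. (1 / q) ^ card (planted_edges D h \<sigma> \<inter> planted_edges D h \<sigma>'))
      / (real (card I))\<^sup>2 \<le> (real (card I))\<^sup>2 * (1 + \<epsilon>) / (real (card I))\<^sup>2"
    by (rule divide_right_mono) simp
  also have "\<dots> = 1 + \<epsilon>" using I by (simp add: card_gt_0_iff)
  finally have second_moment:
    "(\<Sum>\<sigma>\<in>I. \<Sum>\<sigma>'\<in>I. (1 / q) ^ card (planted_edges D h \<sigma> \<inter> planted_edges D h \<sigma>'))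
      / (real (card I))\<^sup>2 - 1 \<le> \<epsilon>" by simp
  have "\<bar>measure_pmf.prob (P1 lam D h n) A - measure_pmf.prob (P0 lam n) A\<bar>
      \<le> sqrt ((\<Sum>\<sigma>\<in>I. \<Sum>\<sigma>'\<in>I. (1 / q) ^ card (planted_edges D h \<sigma> \<inter> planted_edges D h \<sigma>'))
          / (real (card I))\<^sup>2 - 1)"
    unfolding P1_eq_planted_mixture P0_def q_def[symmetric] I_def[symmetric]
    by (rule prob_planted_mixture_diff_le[OF I _ q]) (simp add: I_def planted_edges_subset_pairs)
  also have "\<dots> \<le> sqrt \<epsilon>" using second_moment by (rule real_sqrt_le_mono)
  finally show ?thesis by (simp add: \<epsilon>_def)
qed

lemma abs_prob_diff_le_tv_dist:
  "\<bar>measure_pmf.prob p A - measure_pmf.prob q A\<bar> \<le> tv_dist p q"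
proof -
  have "\<bar>measure_pmf.prob p B - measure_pmf.prob q B\<bar> \<le> 1" for B
    using measure_pmf.prob_le_1[of p B] measure_pmf.prob_le_1[of q B]
      measure_nonneg[of "measure_pmf p" B] measure_nonneg[of "measure_pmf q" B]
    unfolding abs_le_iff by linarith
  then have "bdd_above (range (\<lambda>A. \<bar>measure_pmf.prob p A - measure_pmf.prob q A\<bar>))"
    by (intro bdd_aboveI2[where M = 1])
  then show ?thesis unfolding tv_dist_def by (intro cSUP_upper) simp_all
qed

lemma tv_dist_nonneg: "0 \<le> tv_dist p q"
  using abs_prob_diff_le_tv_dist[of p "{}" q] by linarith

lemma tv_dist_le:
  "(\<And>A. \<bar>measure_pmf.prob p A - measure_pmf.prob q A\<bar> \<le> b) \<Longrightarrow> tv_dist p q \<le> b"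
  unfolding tv_dist_def by (rule cSUP_least) auto

lemma tv_dist_P1_P0_le:
  fixes lam :: real and D h n :: nat
  defines "K \<equiv> card (tree_verts D h)" and "M \<equiv> 2 * max 1 (2 * (real D + 1) / lam)"
  assumes lam: "0 < lam" "lam \<le> real n" and small: "real K * M ^ K / real n < 1 / 2"
  shows "tv_dist (P1 lam D h n) (P0 lam n) \<le> sqrt (2 * (real K * M ^ K / real n))"
proof (rule tv_dist_le)
  have "1 \<le> M" by (simp add: M_def)
  then have "1 \<le> M ^ K" by (rule one_le_power)
  then have "real K \<le> real K * M ^ K" by (simp add: mult_le_cancel_left1)
  then have "2 * K \<le> n" using small lam by (simp add: field_simps)
  then show "\<bar>measure_pmf.prob (P1 lam D h n) A - measure_pmf.prob (P0 lam n) A\<bar>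
      \<le> sqrt (2 * (real K * M ^ K / real n))" for A
    using prob_P1_P0_diff_le[OF lam, of D h A] by (simp add: K_def M_def)
qed

theorem theorem10:
  fixes D :: nat and lam :: real and h :: "nat \<Rightarrow> nat"
  assumes "D > 1"
    and "0 < lam" and "lam < lambda_crit D"
    and "\<forall>\<^sub>F n in sequentially.
           real (h n) \<le> real (h_low D lam n) - ln (real (h_low D lam n)) / ln (real D)
                          + ln (1 - 1 / real D) / ln (real D)"
  shows "((\<lambda>n. tv_dist (P1 lam D (h n) n) (P0 lam n)) \<longlonglongrightarrow> 0)
         \<and> (\<forall>T :: nat \<Rightarrow> nat set set \<Rightarrow> bool.
           (\<lambda>n. measure_pmf.prob (P1 lam D (h n) n) {G. T n G}
              - measure_pmf.prob (P0 lam n) {G. T n G}) \<longlonglongrightarrow> 0)"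
proof -
  define K where "K n = card (tree_verts D (h n))" for n
  define M where "M = 2 * max 1 (2 * (real D + 1) / lam)"
  have lim: "(\<lambda>n. real (K n) * M ^ K n / real n) \<longlonglongrightarrow> 0"
    unfolding K_def using card_tree_verts_le_ln[OF assms(1,2) _ assms(4)]
    by (intro exp_growth_sublogarithmic_tendsto_0) (auto simp: M_def)
  have "\<forall>\<^sub>F n in sequentially. real (K n) * M ^ K n / real n < 1 / 2"
    using order_tendstoD(2)[OF lim, of "1 / 2"] by simp
  then have "\<forall>\<^sub>F n in sequentially.
      norm (tv_dist (P1 lam D (h n) n) (P0 lam n)) \<le> sqrt (2 * (real (K n) * M ^ K n / real n))"
    using eventually_ge_at_top[of "nat \<lceil>lam\<rceil>"]
  proof eventually_elim
    case (elim n)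
    then have "lam \<le> real n" by (simp add: nat_le_iff ceiling_le_iff)
    from tv_dist_P1_P0_le[OF assms(2) this elim(1)[unfolded K_def M_def]]
    show ?case unfolding K_def M_def by (simp add: tv_dist_nonneg)
  qed
  moreover have "(\<lambda>n. sqrt (2 * (real (K n) * M ^ K n / real n))) \<longlonglongrightarrow> 0"
    using tendsto_real_sqrt[OF tendsto_mult_right_zero[OF lim]] by simp
  ultimately have tv: "(\<lambda>n. tv_dist (P1 lam D (h n) n) (P0 lam n)) \<longlonglongrightarrow> 0"
    by (rule Lim_null_comparison)
  have "(\<lambda>n. measure_pmf.prob (P1 lam D (h n) n) {G. T n G} - measure_pmf.prob (P0 lam n) {G. T n G})
      \<longlonglongrightarrow> 0" for T :: "nat \<Rightarrow> nat set set \<Rightarrow> bool"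
    by (intro Lim_null_comparison[OF _ tv] always_eventually allI) (simp add: abs_prob_diff_le_tv_dist)
  with tv show ?thesis by blast
qed

end
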